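(* Let $\mathcal{H}$ be a real Hilbert space, let $A:\mathcal{H}\rightrightarrows\mathcal{H}$ be maximal monotone with $A^{-1}(0)=\{x\in\mathcal{H}: 0\in Ax\}\neq\emptyset$, let $\theta>0$, let $p\geq 1$ be an integer, and let $x_0\in\Omega:=\{x\in\mathcal{H}: 0\notin Ax\}$. Then there exists $t_0>0$ such that the closed-loop control system \[ \dot{x}(t)+x(t)-(I+\lambda(t)A)^{-1}x(t)=0,\qquad \lambda(t)\,\|(I+\lambda(t)A)^{-1}x(t)-x(t)\|^{p-1}=\theta,\qquad x(0)=x_0, \] has a unique solution $(x,\lambda):[0,t_0]\to\mathcal{H}\times(0,+\infty)$. Moreover, $x(\cdot)$ is continuously differentiable and $\lambda(\cdot)$ is locally Lipschitz continuous.
   Context: $(I+\lambda A)^{-1}$ denotes the resolvent of $A$ of index $\lambda>0$ (single-valued and defined on all of $\mathcal{H}$ since $A$ is maximal monotone). For $p\geq 2$ and $x\in\Omega$, the map $\lambda\mapsto \lambda^{1/(p-1)}\|x-(I+\lambda A)^{-1}x\|$ is a continuous strictly increasing bijection from $[0,\infty)$ onto $[0,\infty)$, so the second equation determines $\lambda(t)$ uniquely from $x(t)$ whenever $x(t)\in\Omega$; for $p=1$ it reads $\lambda(t)=\theta$. *)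

theory Defs
  imports "HOL-Analysis.Analysis"
begin

text \<open>Set-valued operators on a real Hilbert space are functions 'a \<Rightarrow> 'a set
  (A x is the image set Ax; the graph is {(x,u). u \<in> A x}).\<close>

definition monotone_op :: "('a::real_inner \<Rightarrow> 'a set) \<Rightarrow> bool" where
  "monotone_op A \<longleftrightarrow> (\<forall>x y u v. u \<in> A x \<longrightarrow> v \<in> A y \<longrightarrow> inner (x - y) (u - v) \<ge> 0)"

definition maximal_monotone :: "('a::real_inner \<Rightarrow> 'a set) \<Rightarrow> bool" where
  "maximal_monotone A \<longleftrightarrow> monotone_op A \<and>
     (\<forall>B. monotone_op B \<longrightarrow> (\<forall>x. A x \<subseteq> B x) \<longrightarrow> B = A)"

text \<open>Resolvent (I + \<lambda>A)^{-1} x: the (unique, for maximal monotone A and \<lambda> > 0)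
  point y with x \<in> y + \<lambda> A y.\<close>
definition resolvent :: "('a::real_inner \<Rightarrow> 'a set) \<Rightarrow> real \<Rightarrow> 'a \<Rightarrow> 'a" where
  "resolvent A lam x = (THE y. \<exists>u \<in> A y. x = y + lam *\<^sub>R u)"

definition locally_lipschitz_on :: "real set \<Rightarrow> (real \<Rightarrow> real) \<Rightarrow> bool" where
  "locally_lipschitz_on S f \<longleftrightarrow>
     (\<forall>t \<in> S. \<exists>r > 0. \<exists>L. L-lipschitz_on (cball t r \<inter> S) f)"

definition cl_solution ::
  "('a::real_inner \<Rightarrow> 'a set) \<Rightarrow> real \<Rightarrow> nat \<Rightarrow> 'a \<Rightarrow> real \<Rightarrow> (real \<Rightarrow> 'a) \<Rightarrow> (real \<Rightarrow> real) \<Rightarrow> bool"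
  where
  "cl_solution A \<theta> p x0 t0 x lam \<longleftrightarrow>
     x 0 = x0 \<and>
     (\<forall>t \<in> {0..t0}. lam t > 0 \<and>
        (x has_vector_derivative (resolvent A (lam t) (x t) - x t)) (at t within {0..t0}) \<and>
        lam t * norm (resolvent A (lam t) (x t) - x t) ^ (p - 1) = \<theta>)"

end

theory Submission
  imports Defs
begin

text \<open>By Minty's theorem, a consequence of the Kirszbraun--Valentine extension theorem in
  Hilbert space, the resolvent \<open>J\<^sub>\<lambda> = (I + \<lambda>A)\<^sup>-\<^sup>1\<close> is an everywhere defined, firmly nonexpansive
  map. The gap \<open>norm (x - J\<^sub>\<lambda> x)\<close> is nondecreasing in \<open>\<lambda>\<close> and 1-Lipschitz in \<open>x\<close>, so for
  \<open>0 \<notin> A x\<close> the feedback equation \<open>\<lambda> * gap ^ (p - 1) = \<theta>\<close> has exactly one root \<open>\<lambda>(x)\<close>,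
  and Bernoulli's inequality shows that \<open>x \<mapsto> \<lambda>(x)\<close> is locally Lipschitz. The closed-loop system
  is therefore the autonomous equation \<open>x' = J\<^bsub>\<lambda>(x)\<^esub> x - x\<close> with a locally Lipschitz
  right-hand side: Picard iteration gives a local solution, a continuation argument gives
  uniqueness, and \<open>\<lambda>(t) = \<lambda>(x(t))\<close> is Lipschitz along the solution.\<close>

section \<open>Hilbert-space geometry\<close>

lemma power2_norm_add:
  fixes a b :: "'a::real_inner"
  shows "norm (a + b)^2 = norm a^2 + 2 * inner a b + norm b^2"
  by (simp add: power2_norm_eq_inner inner_add_left inner_add_right inner_commute)

lemma power2_norm_diff:
  fixes a b :: "'a::real_inner"
  shows "norm (a - b)^2 = norm a^2 - 2 * inner a b + norm b^2"
  by (simp add: power2_norm_eq_inner inner_diff_left inner_diff_right inner_commute)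

lemma nearest_point_convex_inner_le:
  fixes S :: "'a::real_inner set"
  assumes "convex S" "q \<in> S" "\<And>s. s \<in> S \<Longrightarrow> norm (q - w) \<le> norm (s - w)" "s \<in> S"
  shows "inner (w - q) (s - q) \<le> 0"
proof -
  define f where "f t = 2 * inner (q - w) (s - q) + t * norm (s - q)^2" for t
  have "0 \<le> f t" if t: "0 < t" "t < 1" for t
  proof -
    have "q + t *\<^sub>R (s - q) \<in> S"
      using assms(1,2,4) t convexD[of S q s "1 - t" t] by (simp add: algebra_simps)
    hence "norm (q - w)^2 \<le> norm ((q - w) + t *\<^sub>R (s - q))^2"
      using assms(3) by (force simp: algebra_simps intro: power_mono)
    also have "\<dots> = norm (q - w)^2 + t * f t"
      unfolding power2_norm_add f_def by (simp add: power_mult_distrib power2_eq_square algebra_simps flip: scaleR_diff_right)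
    finally show ?thesis using t by (simp add: zero_le_mult_iff)
  qed
  moreover have "(f \<longlongrightarrow> f 0) (at_right 0)"
    unfolding f_def by (intro tendsto_intros)
  ultimately have "0 \<le> f 0"
    by (intro tendsto_lowerbound[of f "f 0" "at_right 0"]) (auto intro: eventually_at_rightI[of 0 1])
  thus ?thesis by (simp add: f_def inner_diff_left)
qed

lemma nearest_point_convex_norm_le:
  fixes S :: "'a::real_inner set"
  assumes "convex S" "q \<in> S" "\<And>s. s \<in> S \<Longrightarrow> norm (q - w) \<le> norm (s - w)" "s \<in> S"
  shows "norm (s - q)^2 \<le> norm (s - w)^2 - norm (q - w)^2"
proof -
  have "norm (s - w)^2 = norm ((q - w) + (s - q))^2" by simp
  also have "\<dots> = norm (q - w)^2 - 2 * inner (w - q) (s - q) + norm (s - q)^2"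
    unfolding power2_norm_add by (simp add: inner_diff_left)
  finally show ?thesis using nearest_point_convex_inner_le[OF assms] by simp
qed

lemma convex_near_min_norm_dist:
  fixes S :: "'a::real_inner set"
  assumes "convex S" "\<And>s. s \<in> S \<Longrightarrow> d \<le> norm s" "0 \<le> d"
    and "x \<in> S" "y \<in> S" "norm x \<le> d + e" "norm y \<le> d + e"
  shows "norm (x - y)^2 \<le> 8 * d * e + 4 * e^2"
proof -
  have "(1/2) *\<^sub>R (x + y) \<in> S"
    using convexD[OF assms(1,4,5), of "1/2" "1/2"] by (simp add: scaleR_add_right)
  hence "2 * d \<le> norm (x + y)" using assms(2) by fastforce
  have "norm (x - y)^2 = 2 * norm x^2 + 2 * norm y^2 - norm (x + y)^2"
    unfolding power2_norm_add power2_norm_diff by simp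
  also have "\<dots> \<le> 2 * (d + e)^2 + 2 * (d + e)^2 - (2 * d)^2"
    using assms(3,6,7) \<open>2 * d \<le> norm (x + y)\<close> by (intro diff_mono add_mono mult_left_mono power_mono) auto
  also have "\<dots> = 8 * d * e + 4 * e^2" by (simp add: power2_eq_square algebra_simps)
  finally show ?thesis .
qed

lemma closed_convex_min_norm_exists:
  fixes S :: "'a::{real_inner,complete_space} set"
  assumes "closed S" "convex S" "S \<noteq> {}"
  shows "\<exists>q\<in>S. \<forall>s\<in>S. norm q \<le> norm s"
proof -
  define d where "d = Inf (norm ` S)"
  have d_le: "d \<le> norm s" if "s \<in> S" for s
    unfolding d_def using that by (intro cInf_lower) (auto intro: bdd_belowI[of _ 0])
  have d0: "0 \<le> d" unfolding d_def using assms(3) by (intro cInf_greatest) auto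
  define e where "e n = inverse (real (Suc n))" for n
  have e_pos: "0 < e n" for n unfolding e_def by simp
  have e_lim: "e \<longlonglongrightarrow> 0" unfolding e_def by (rule LIMSEQ_inverse_real_of_nat)
  have e_mono: "e n \<le> e m" if "m \<le> n" for m n
    unfolding e_def using that by (simp add: le_imp_inverse_le)
  define T where "T n = S \<inter> cball 0 (d + e n)" for n
  obtain q where q: "\<And>n. q \<in> T n"
  proof (rule decreasing_closed_nest)
    show "closed (T n)" for n unfolding T_def using assms(1) by blast
    show "T n \<noteq> {}" for n
    proof -
      have "Inf (norm ` S) < d + e n" unfolding d_def using e_pos by simp
      then obtain s where "s \<in> S" "norm s < d + e n"
        using cInf_lessD[of "norm ` S"] assms(3) by auto
      thus ?thesis unfolding T_def by auto
    qed
    show "T n \<subseteq> T m" if "m \<le> n" for m n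
      unfolding T_def using e_mono[OF that] by auto
    show "\<exists>n. \<forall>x\<in>T n. \<forall>y\<in>T n. dist x y < \<epsilon>" if "0 < \<epsilon>" for \<epsilon>
    proof -
      have "(\<lambda>n. 8 * d * e n + 4 * (e n)^2) \<longlonglongrightarrow> 8 * d * 0 + 4 * 0^2"
        by (intro tendsto_intros e_lim)
      moreover have "8 * d * 0 + 4 * 0^2 < \<epsilon>^2" using \<open>0 < \<epsilon>\<close> by simp
      ultimately have "\<forall>\<^sub>F n in sequentially. 8 * d * e n + 4 * (e n)^2 < \<epsilon>^2"
        by (rule order_tendstoD(2))
      then obtain n where n: "8 * d * e n + 4 * (e n)^2 < \<epsilon>^2"
        unfolding eventually_sequentially by blast
      have "dist x y < \<epsilon>" if "x \<in> T n" "y \<in> T n" for x y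
      proof -
        have "norm (x - y)^2 \<le> 8 * d * e n + 4 * (e n)^2"
          using that unfolding T_def by (intro convex_near_min_norm_dist[OF assms(2) d_le d0]) auto
        hence "norm (x - y)^2 < \<epsilon>^2" using n by linarith
        thus ?thesis using \<open>0 < \<epsilon>\<close> by (simp add: dist_norm power_less_imp_less_base)
      qed
      thus ?thesis by blast
    qed
  qed blast
  have "norm q \<le> d"
  proof (rule LIMSEQ_le_const)
    show "(\<lambda>n. d + e n) \<longlonglongrightarrow> d" using tendsto_add[OF tendsto_const e_lim] by simp
    show "\<exists>N. \<forall>n\<ge>N. norm q \<le> d + e n" using q unfolding T_def by auto
  qed
  thus ?thesis using q d_le unfolding T_def by (meson IntD1 order_trans)
qed

definition min_norm_point :: "'a::real_normed_vector set \<Rightarrow> 'a" where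
  "min_norm_point S = (SOME q. q \<in> S \<and> (\<forall>s\<in>S. norm q \<le> norm s))"

lemma min_norm_point:
  fixes S :: "'a::{real_inner,complete_space} set"
  assumes "closed S" "convex S" "S \<noteq> {}"
  shows min_norm_point_in: "min_norm_point S \<in> S"
    and min_norm_point_le: "\<And>s. s \<in> S \<Longrightarrow> norm (min_norm_point S) \<le> norm s"
    and min_norm_point_dist: "\<And>s. s \<in> S \<Longrightarrow>
          norm (s - min_norm_point S)^2 \<le> norm s^2 - norm (min_norm_point S)^2"
proof -
  have *: "min_norm_point S \<in> S \<and> (\<forall>s\<in>S. norm (min_norm_point S) \<le> norm s)"
    unfolding min_norm_point_def using closed_convex_min_norm_exists[OF assms] by (rule someI2_bex)
  thus "min_norm_point S \<in> S" "\<And>s. s \<in> S \<Longrightarrow> norm (min_norm_point S) \<le> norm s" by auto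
  fix s assume "s \<in> S"
  thus "norm (s - min_norm_point S)^2 \<le> norm s^2 - norm (min_norm_point S)^2"
    using nearest_point_convex_norm_le[OF assms(2), of "min_norm_point S" 0] * by simp
qed

lemma min_norm_point_dist_le:
  fixes S :: "'a::{real_inner,complete_space} set"
  assumes "closed S" "convex S" "s \<in> S" "norm s \<le> M" "M - e \<le> norm (min_norm_point S)" "0 \<le> e"
  shows "dist s (min_norm_point S) \<le> sqrt (2 * M * e)"
proof -
  define q where "q = min_norm_point S"
  have "S \<noteq> {}" using assms(3) by blast
  have "norm q \<le> M" using min_norm_point_le[OF assms(1,2) \<open>S \<noteq> {}\<close> assms(3)] assms(4) unfolding q_def by simp
  have "norm (s - q)^2 \<le> M^2 - norm q^2"
    using min_norm_point_dist[OF assms(1,2) \<open>S \<noteq> {}\<close> assms(3)] power_mono[OF assms(4) norm_ge_zero, of 2]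
    unfolding q_def by simp
  also have "\<dots> = (M - norm q) * (M + norm q)" by algebra
  also have "\<dots> \<le> e * (2 * M)"
    using assms(5,6) \<open>norm q \<le> M\<close> norm_ge_zero[of q] unfolding q_def by (intro mult_mono) linarith+
  finally show ?thesis unfolding q_def dist_norm by (simp add: real_le_rsqrt mult_ac)
qed

lemma nested_min_norm_limit:
  fixes C :: "nat \<Rightarrow> 'a::{real_inner,complete_space} set"
  assumes "\<And>n. closed (C n)" "\<And>n. convex (C n)" "\<And>n. C n \<noteq> {}" "\<And>m n. m \<le> n \<Longrightarrow> C n \<subseteq> C m"
    and norms: "\<And>n. norm (min_norm_point (C n)) \<le> M" "\<And>n. M - e n \<le> norm (min_norm_point (C n))"
    and "\<And>n. 0 \<le> e n" "e \<longlonglongrightarrow> 0"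
  obtains a where "\<And>n. a \<in> C n" "\<And>n s. s \<in> C n \<Longrightarrow> norm s \<le> M \<Longrightarrow> dist s a \<le> 2 * sqrt (2 * M * e n)"
proof -
  define T where "T n = C n \<inter> cball 0 M" for n
  define \<delta> where "\<delta> n = 2 * sqrt (2 * M * e n)" for n
  have T_small: "dist x (min_norm_point (C n)) \<le> sqrt (2 * M * e n)" if "x \<in> T n" for x n
    using that min_norm_point_dist_le[OF assms(1,2) _ _ norms(2) assms(7)] unfolding T_def by simp
  have T_diam: "dist x y \<le> \<delta> n" if "x \<in> T n" "y \<in> T n" for x y n
    using dist_triangle2[of x y "min_norm_point (C n)"] T_small[OF that(1)] T_small[OF that(2)]
    unfolding \<delta>_def by linarith
  have "\<delta> \<longlonglongrightarrow> 2 * sqrt (2 * M * 0)" unfolding \<delta>_def by (intro tendsto_intros assms(8))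
  hence \<delta>_lim: "\<delta> \<longlonglongrightarrow> 0" by simp
  obtain a where a: "\<And>n. a \<in> T n"
  proof (rule decreasing_closed_nest)
    show "closed (T n)" for n unfolding T_def using assms(1) by blast
    show "T n \<noteq> {}" for n
      using min_norm_point_in[OF assms(1-3), of n] norms(1)[of n] unfolding T_def by auto
    show "T n \<subseteq> T m" if "m \<le> n" for m n unfolding T_def using assms(4)[OF that] by blast
    show "\<exists>n. \<forall>x\<in>T n. \<forall>y\<in>T n. dist x y < \<epsilon>" if "0 < \<epsilon>" for \<epsilon>
    proof -
      obtain n where "\<delta> n < \<epsilon>"
        using order_tendstoD(2)[OF \<delta>_lim \<open>0 < \<epsilon>\<close>] unfolding eventually_sequentially by blast
      thus ?thesis using T_diam by (meson le_less_trans)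
    qed
  qed blast
  show ?thesis
  proof (rule that)
    show "a \<in> C n" for n using a[of n] unfolding T_def by blast
    show "dist s a \<le> 2 * sqrt (2 * M * e n)" if "s \<in> C n" "norm s \<le> M" for n s
      using T_diam[OF _ a, of s n] that unfolding T_def \<delta>_def by simp
  qed
qed

text \<open>A form of weak compactness of bounded closed convex sets. The norms of the minimum-norm
  points of the finite subintersections increase to a supremum \<open>M\<close>; along a chain approaching
  \<open>M\<close>, the Pythagorean inequality of the minimum-norm point squeezes the subintersections cut
  down to norm at most \<open>M\<close> to a single point, which lies in every \<open>K i\<close>.\<close>

lemma closed_convex_Inter_nonempty:
  fixes K :: "'i \<Rightarrow> 'a::{real_inner,complete_space} set"
  assumes closed: "\<And>i. i \<in> I \<Longrightarrow> closed (K i)" and convex: "\<And>i. i \<in> I \<Longrightarrow> convex (K i)"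
    and "i0 \<in> I" "bounded (K i0)"
    and finite_Inter: "\<And>F. finite F \<Longrightarrow> F \<subseteq> I \<Longrightarrow> (\<Inter>i\<in>F. K i) \<noteq> {}"
  shows "(\<Inter>i\<in>I. K i) \<noteq> {}"
proof -
  define FS where "FS = {F. finite F \<and> i0 \<in> F \<and> F \<subseteq> I}"
  define P where "P F = min_norm_point (\<Inter>i\<in>F. K i)" for F
  have S: "closed (\<Inter>i\<in>F. K i)" "convex (\<Inter>i\<in>F. K i)" "(\<Inter>i\<in>F. K i) \<noteq> {}" if "F \<in> FS" for F
    using that closed convex finite_Inter unfolding FS_def by (auto intro!: closed_INT convex_INT)
  have P_in: "P F \<in> (\<Inter>i\<in>F. K i)" if "F \<in> FS" for F
    unfolding P_def using min_norm_point_in[OF S[OF that]] .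
  have P_mono: "norm (P F) \<le> norm (P G)" if "F \<in> FS" "G \<in> FS" "F \<subseteq> G" for F G
    using min_norm_point_le[OF S[OF that(1)]] P_in[OF that(2)] that(3) unfolding P_def by blast
  obtain B where B: "\<And>x. x \<in> K i0 \<Longrightarrow> norm x \<le> B" using \<open>bounded (K i0)\<close> by (auto simp: bounded_iff)
  have "{i0} \<in> FS" unfolding FS_def using \<open>i0 \<in> I\<close> by simp
  have bdd: "bdd_above ((\<lambda>F. norm (P F)) ` FS)"
    using B P_in unfolding FS_def by (intro bdd_aboveI2[of _ _ B]) auto
  define M where "M = (SUP F\<in>FS. norm (P F))"
  have le_M: "norm (P F) \<le> M" if "F \<in> FS" for F unfolding M_def using bdd that by (rule cSUP_upper2) simp
  define e where "e n = inverse (real (Suc n))" for n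
  have "FS \<noteq> {}" using \<open>{i0} \<in> FS\<close> by blast
  have "\<exists>G\<in>FS. M - e n < norm (P G)" for n
    using less_cSUP_iff[OF \<open>FS \<noteq> {}\<close> bdd, of "M - e n"] unfolding M_def e_def by simp
  then obtain G where G: "\<And>n. G n \<in> FS" "\<And>n. M - e n < norm (P (G n))" by metis
  define F where "F n = (\<Union>k\<le>n. G k)" for n
  have F: "F n \<in> FS" for n using G(1) unfolding F_def FS_def by auto
  have F_close: "M - e n \<le> norm (P (F n))" for n
    using G(2)[of n] P_mono[OF G(1) F, of n n] unfolding F_def by fastforce
  obtain a where a: "\<And>n. a \<in> (\<Inter>i\<in>F n. K i)"
    and close: "\<And>n s. s \<in> (\<Inter>i\<in>F n. K i) \<Longrightarrow> norm s \<le> M \<Longrightarrow> dist s a \<le> 2 * sqrt (2 * M * e n)"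
  proof (rule nested_min_norm_limit[of "\<lambda>n. \<Inter>i\<in>F n. K i" M e])
    show "closed (\<Inter>i\<in>F n. K i)" "convex (\<Inter>i\<in>F n. K i)" "(\<Inter>i\<in>F n. K i) \<noteq> {}" for n
      using S[OF F] by auto
    show "(\<Inter>i\<in>F n. K i) \<subseteq> (\<Inter>i\<in>F m. K i)" if "m \<le> n" for m n
      using that unfolding F_def by (auto intro: le_trans)
    show "norm (min_norm_point (\<Inter>i\<in>F n. K i)) \<le> M" "M - e n \<le> norm (min_norm_point (\<Inter>i\<in>F n. K i))"
      for n using le_M[OF F] F_close unfolding P_def by auto
    show "0 \<le> e n" for n unfolding e_def by simp
    show "e \<longlonglongrightarrow> 0" unfolding e_def by (rule LIMSEQ_inverse_real_of_nat)
  qed blast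
  have "a \<in> K i" if "i \<in> I" for i
  proof -
    define Q where "Q n = P (insert i (F n))" for n
    have Q: "insert i (F n) \<in> FS" for n using F[of n] that unfolding FS_def by auto
    have "norm (Q n - a) \<le> 2 * sqrt (2 * M * e n)" for n
      using close[of "Q n" n] P_in[OF Q, of n] le_M[OF Q, of n] unfolding Q_def by (auto simp: dist_norm)
    moreover have "(\<lambda>n. 2 * sqrt (2 * M * e n)) \<longlonglongrightarrow> 2 * sqrt (2 * M * 0)"
      unfolding e_def by (intro tendsto_intros LIMSEQ_inverse_real_of_nat)
    ultimately have "(\<lambda>n. Q n - a) \<longlonglongrightarrow> 0"
      by (intro Lim_null_comparison[of "\<lambda>n. Q n - a" "\<lambda>n. 2 * sqrt (2 * M * e n)"]
          always_eventually) simp_all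
    hence "Q \<longlonglongrightarrow> a" by (simp add: LIM_zero_iff)
    moreover have "Q n \<in> K i" for n using P_in[OF Q] unfolding Q_def by blast
    ultimately show ?thesis using closed_sequentially[OF closed[OF that]] by blast
  qed
  thus ?thesis by blast
qed

section \<open>Kirszbraun's extension theorem and Minty's theorem\<close>

lemma weighted_pairwise_dist_sq:
  fixes a :: "'j \<Rightarrow> 'a::real_inner"
  assumes "sum \<mu> J = 1"
  shows "(\<Sum>x\<in>J. \<Sum>y\<in>J. \<mu> x * \<mu> y * norm (a x - a y)^2)
     = 2 * (\<Sum>x\<in>J. \<mu> x * norm (a x - v)^2) - 2 * norm (\<Sum>x\<in>J. \<mu> x *\<^sub>R (a x - v))^2"
proof -
  define b where "b x = a x - v" for x
  have ab: "a x - a y = b x - b y" for x y unfolding b_def by simp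
  have "(\<Sum>x\<in>J. \<Sum>y\<in>J. \<mu> x * \<mu> y * norm (a x - a y)^2)
     = (\<Sum>x\<in>J. \<Sum>y\<in>J. \<mu> x * norm (b x)^2 * \<mu> y + \<mu> y * norm (b y)^2 * \<mu> x
                          - 2 * (\<mu> x * \<mu> y * inner (b x) (b y)))"
    unfolding ab power2_norm_diff by (intro sum.cong refl) (simp add: algebra_simps)
  also have "\<dots> = (\<Sum>x\<in>J. \<mu> x * norm (b x)^2 * (\<Sum>y\<in>J. \<mu> y))
             + (\<Sum>x\<in>J. \<mu> x * (\<Sum>y\<in>J. \<mu> y * norm (b y)^2))
             - 2 * (\<Sum>x\<in>J. \<Sum>y\<in>J. \<mu> x * \<mu> y * inner (b x) (b y))"
    by (simp add: sum.distrib sum_subtractf sum_distrib_left sum_distrib_right mult.commute mult.left_commute)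
  also have "(\<Sum>x\<in>J. \<Sum>y\<in>J. \<mu> x * \<mu> y * inner (b x) (b y)) = norm (\<Sum>x\<in>J. \<mu> x *\<^sub>R b x)^2"
  proof -
    have "norm (\<Sum>x\<in>J. \<mu> x *\<^sub>R b x)^2 = (\<Sum>x\<in>J. \<Sum>y\<in>J. \<mu> x * (\<mu> y * inner (b y) (b x)))"
      by (simp add: power2_norm_eq_inner inner_sum_left inner_sum_right sum_distrib_left mult.assoc)
    also have "\<dots> = (\<Sum>y\<in>J. \<Sum>x\<in>J. \<mu> x * (\<mu> y * inner (b y) (b x)))"
      by (rule sum.swap)
    finally show ?thesis by (simp add: mult_ac)
  qed
  finally show ?thesis using assms by (simp add: b_def sum_distrib_right[symmetric] mult.commute)
qed

text \<open>Valentine's variance argument: with convex weights \<open>u\<close> representing \<open>w\<close>, the weighted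
  sum of \<open>norm (c i - c j)\<^sup>2\<close> equals \<open>2 lam\<^sup>2 R\<close> and that of \<open>norm (p i - p j)\<^sup>2\<close> is at most
  \<open>2 R\<close>, where \<open>R\<close> is the weighted sum of \<open>norm (p i - z)\<^sup>2\<close>.\<close>

lemma hull_dist_ratio_le_1:
  fixes c p :: "'i \<Rightarrow> 'a::real_inner"
  assumes "finite A" "A \<noteq> {}" "w \<in> convex hull (c ` A)"
    and expand: "\<And>i j. i \<in> A \<Longrightarrow> j \<in> A \<Longrightarrow> norm (c i - c j) \<le> norm (p i - p j)"
    and ratio: "\<And>i. i \<in> A \<Longrightarrow> norm (c i - w) = lam * norm (p i - z)"
    and "\<And>i. i \<in> A \<Longrightarrow> p i \<noteq> z" "0 \<le> lam"
  shows "lam \<le> 1"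
proof -
  \<comment> \<open>Writing \<open>c ` A\<close> as a union of singletons yields convex weights indexed by \<open>A\<close> itself.\<close>
  have "c ` A = (\<Union>i\<in>A. {c i})" by blast
  then obtain u s where us: "w = (\<Sum>i\<in>A. u i *\<^sub>R s i)" "\<forall>i\<in>A. 0 \<le> u i" "sum u A = 1"
    "\<forall>i\<in>A. s i = c i"
    using assms(3) convex_hull_finite_union[of A "\<lambda>i. {c i}"] assms(1) by auto
  hence u: "\<And>i. i \<in> A \<Longrightarrow> 0 \<le> u i" "sum u A = 1" "(\<Sum>i\<in>A. u i *\<^sub>R c i) = w"
    by auto
  define R where "R = (\<Sum>i\<in>A. u i * norm (p i - z)^2)"
  have "R > 0"
  proof -
    obtain i where "i \<in> A" "u i \<noteq> 0" using u(2) by (metis sum.neutral zero_neq_one)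
    hence "0 < u i * norm (p i - z)^2" using u(1) assms(6) by (simp add: less_le)
    also have "\<dots> \<le> R" unfolding R_def using u(1) \<open>i \<in> A\<close> assms(1)
      by (intro member_le_sum) auto
    finally show ?thesis .
  qed
  have centred: "(\<Sum>i\<in>A. u i *\<^sub>R (c i - w)) = 0"
    using u(2,3) by (simp add: scaleR_diff_right sum_subtractf flip: scaleR_sum_left)
  have "lam^2 * (2 * R) = (\<Sum>i\<in>A. \<Sum>j\<in>A. u i * u j * norm (c i - c j)^2)"
    unfolding weighted_pairwise_dist_sq[OF u(2), of c w] centred R_def
    by (simp add: ratio power_mult_distrib sum_distrib_left mult_ac cong: sum.cong)
  also have "\<dots> \<le> (\<Sum>i\<in>A. \<Sum>j\<in>A. u i * u j * norm (p i - p j)^2)"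
    using u(1) expand by (intro sum_mono mult_left_mono power_mono) auto
  also have "\<dots> \<le> 2 * R"
    unfolding weighted_pairwise_dist_sq[OF u(2), of p z] R_def by simp
  finally have "lam^2 \<le> 1" using \<open>R > 0\<close> by simp
  thus ?thesis using \<open>0 \<le> lam\<close> by (simp add: power_le_one_iff)
qed

lemma dist_decreases_toward_nearest_point:
  fixes H :: "'a::real_inner set"
  assumes "convex H" "q \<in> H" "\<And>s. s \<in> H \<Longrightarrow> norm (q - w) \<le> norm (s - w)" "q \<noteq> w"
    and "c \<in> H" "0 < t" "t \<le> 1"
  shows "norm (w + t *\<^sub>R (q - w) - c) < norm (w - c)"
proof -
  define d where "d = norm (q - w)"
  have "inner (w - c) (q - w) = - (d^2) + inner (w - q) (c - q)"
    unfolding d_def by (simp add: power2_norm_eq_inner inner_diff_left inner_diff_right inner_commute)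
  hence obtuse: "inner (w - c) (q - w) \<le> - (d^2)"
    using nearest_point_convex_inner_le[OF assms(1-3,5)] by simp
  have shift: "w + t *\<^sub>R (q - w) - c = (w - c) + t *\<^sub>R (q - w)" by simp
  have "norm (w + t *\<^sub>R (q - w) - c)^2 = norm (w - c)^2 + 2 * t * inner (w - c) (q - w) + t^2 * d^2"
    unfolding shift power2_norm_add d_def by (simp add: power_mult_distrib)
  also have "\<dots> \<le> norm (w - c)^2 - t * (2 - t) * d^2"
    using mult_left_mono[OF obtuse, of "2 * t"] \<open>0 < t\<close> by (simp add: algebra_simps power2_eq_square)
  also have "\<dots> < norm (w - c)^2"
    using assms(4,6,7) unfolding d_def by simp
  finally show ?thesis by (simp add: power_less_imp_less_base)
qed

lemma minimax_point_in_active_hull: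
  fixes c :: "'i \<Rightarrow> 'a::real_inner"
  assumes "finite F" "convex K" "c ` F \<subseteq> K" "w0 \<in> K"
    and bound: "\<And>i. i \<in> F \<Longrightarrow> norm (w0 - c i) \<le> lam * r i"
    and minimal: "\<And>w. w \<in> K \<Longrightarrow> \<exists>i\<in>F. lam * r i \<le> norm (w - c i)"
  shows "w0 \<in> convex hull (c ` {i\<in>F. norm (w0 - c i) = lam * r i})"
    (is "_ \<in> convex hull (c ` ?A)")
proof (rule ccontr)
  assume outside: "w0 \<notin> convex hull (c ` ?A)"
  define H where "H = convex hull (c ` ?A)"
  obtain i where "i \<in> F" "lam * r i \<le> norm (w0 - c i)" using minimal[OF \<open>w0 \<in> K\<close>] by blast
  hence "norm (w0 - c i) = lam * r i" using bound[OF \<open>i \<in> F\<close>] by linarith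
  hence "i \<in> ?A" using \<open>i \<in> F\<close> by simp
  hence "c i \<in> H" unfolding H_def by (intro hull_inc imageI)
  have "compact H" unfolding H_def using \<open>finite F\<close> by (simp add: finite_imp_compact_convex_hull)
  moreover have "H \<noteq> {}" using \<open>c i \<in> H\<close> by blast
  moreover have "continuous_on H (\<lambda>s. norm (s - w0))" by (intro continuous_intros)
  ultimately obtain q where q: "q \<in> H" "\<And>s. s \<in> H \<Longrightarrow> norm (q - w0) \<le> norm (s - w0)"
    by (metis continuous_attains_inf)
  have "q \<noteq> w0" using q(1) outside unfolding H_def by auto
  have "H \<subseteq> K" unfolding H_def using assms(2,3) by (intro hull_minimal) auto
  define wt where "wt t = w0 + t *\<^sub>R (q - w0)" for t
  have active: "norm (wt t - c i) < lam * r i" if "0 < t" "t \<le> 1" "i \<in> ?A" for t i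
    using dist_decreases_toward_nearest_point[of H q w0 "c i" t] q \<open>q \<noteq> w0\<close> that
    unfolding wt_def H_def by (auto intro: hull_inc)
  have inactive: "\<forall>\<^sub>F t in at_right 0. norm (wt t - c j) < lam * r j" if "j \<in> F - ?A" for j
  proof -
    have "((\<lambda>t. norm (wt t - c j)) \<longlongrightarrow> norm (wt 0 - c j)) (at_right 0)"
      unfolding wt_def by (intro tendsto_intros)
    moreover have "norm (wt 0 - c j) < lam * r j" using bound[of j] that unfolding wt_def by auto
    ultimately show ?thesis by (rule order_tendstoD)
  qed
  have "\<forall>\<^sub>F t in at_right 0. \<forall>j\<in>F - ?A. norm (wt t - c j) < lam * r j"
    using \<open>finite F\<close> inactive by (intro eventually_ball_finite) auto
  moreover have "\<forall>\<^sub>F t in at_right (0::real). 0 < t \<and> t \<le> 1"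
    by (rule eventually_at_rightI[of 0 1]) auto
  ultimately have "\<forall>\<^sub>F t in at_right 0. (\<forall>j\<in>F - ?A. norm (wt t - c j) < lam * r j) \<and> 0 < t \<and> t \<le> 1"
    by (rule eventually_conj)
  then obtain t where t: "0 < t" "t \<le> 1" "\<And>j. j \<in> F - ?A \<Longrightarrow> norm (wt t - c j) < lam * r j"
    using eventually_happens'[OF trivial_limit_at_right_real] by blast
  have "wt t \<in> K"
    using convexD_alt[OF assms(2) \<open>w0 \<in> K\<close>, of q t] q(1) \<open>H \<subseteq> K\<close> t(1,2)
    unfolding wt_def by (auto simp: algebra_simps)
  moreover have "norm (wt t - c i) < lam * r i" if "i \<in> F" for i
    using active[OF t(1,2)] t(3) that by blast
  ultimately show False using minimal by (meson not_le)
qed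

lemma continuous_on_Max_finite:
  fixes f :: "'i \<Rightarrow> 'a::topological_space \<Rightarrow> real"
  assumes "finite F" "F \<noteq> {}" "\<And>i. i \<in> F \<Longrightarrow> continuous_on K (f i)"
  shows "continuous_on K (\<lambda>w. Max ((\<lambda>i. f i w) ` F))"
  using assms
proof (induction F rule: finite_ne_induct)
  case (insert x F)
  have "(\<lambda>w. Max ((\<lambda>i. f i w) ` insert x F)) = (\<lambda>w. max (f x w) (Max ((\<lambda>i. f i w) ` F)))"
    using insert by (auto simp: Max_insert)
  thus ?case using insert by (auto intro!: continuous_on_max)
qed simp

lemma minimax_ratio_point:
  fixes c :: "'i \<Rightarrow> 'a::real_normed_vector"
  assumes "finite F" "F \<noteq> {}" "\<And>i. i \<in> F \<Longrightarrow> 0 < r i" "compact K" "K \<noteq> {}"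
  obtains w0 lam where "w0 \<in> K" "0 \<le> lam" "\<And>i. i \<in> F \<Longrightarrow> norm (w0 - c i) \<le> lam * r i"
    "\<And>w. w \<in> K \<Longrightarrow> \<exists>i\<in>F. lam * r i \<le> norm (w - c i)"
proof -
  define g where "g w = Max ((\<lambda>i. norm (w - c i) / r i) ` F)" for w
  have "r i \<noteq> 0" if "i \<in> F" for i using assms(3)[OF that] by simp
  hence "continuous_on K g" unfolding g_def
    by (intro continuous_on_Max_finite assms(1,2)) (auto intro!: continuous_intros)
  then obtain w0 where w0: "w0 \<in> K" "\<And>w. w \<in> K \<Longrightarrow> g w0 \<le> g w"
    using continuous_attains_inf[OF assms(4,5)] by metis
  have ratio_le: "norm (w - c i) / r i \<le> g w" if "i \<in> F" for w i
    unfolding g_def using assms(1) that by (auto intro: Max_ge)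
  have "g w \<in> (\<lambda>i. norm (w - c i) / r i) ` F" for w
    unfolding g_def using assms(1,2) by (intro Max_in) auto
  hence ratio_eq: "\<exists>i\<in>F. g w = norm (w - c i) / r i" for w by auto
  show ?thesis
  proof (rule that[OF w0(1), of "g w0"])
    obtain i where "i \<in> F" using assms(2) by blast
    thus "0 \<le> g w0" using ratio_le[of i w0] assms(3)[of i] by (meson divide_nonneg_pos norm_ge_zero order_trans)
    show "norm (w0 - c i) \<le> g w0 * r i" if "i \<in> F" for i
      using ratio_le[OF that, of w0] assms(3)[OF that] by (simp add: pos_divide_le_eq)
    show "\<exists>i\<in>F. g w0 * r i \<le> norm (w - c i)" if "w \<in> K" for w
    proof -
      obtain i where i: "i \<in> F" "g w = norm (w - c i) / r i" using ratio_eq by blast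
      hence "g w0 \<le> norm (w - c i) / r i" using w0(2)[OF that] by simp
      thus ?thesis using i(1) assms(3)[OF i(1)] by (auto simp: pos_le_divide_eq)
    qed
  qed
qed

text \<open>Valentine's proof: take a point of the convex hull of the \<open>c i\<close> that minimises the largest
  ratio \<open>norm (w - c i) / norm (z - p i)\<close>; it lies in the hull of the indices where the ratio is
  attained, so the variance argument bounds the ratio by 1.\<close>

lemma kirszbraun_finite:
  fixes c p :: "'i \<Rightarrow> 'a::real_inner"
  assumes "finite F"
    and expand: "\<And>i j. i \<in> F \<Longrightarrow> j \<in> F \<Longrightarrow> norm (c i - c j) \<le> norm (p i - p j)"
  shows "\<exists>w. \<forall>i\<in>F. norm (w - c i) \<le> norm (z - p i)"
proof (cases "F = {} \<or> (\<exists>i\<in>F. z = p i)")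
  case True
  thus ?thesis using expand by (metis empty_iff norm_minus_commute)
next
  case False
  hence "F \<noteq> {}" and r_pos: "\<And>i. i \<in> F \<Longrightarrow> 0 < norm (z - p i)" by auto
  define K where "K = convex hull (c ` F)"
  have "compact K" "K \<noteq> {}" "convex K" "c ` F \<subseteq> K"
    unfolding K_def using \<open>finite F\<close> \<open>F \<noteq> {}\<close> by (auto simp: finite_imp_compact_convex_hull hull_subset)
  obtain w0 lam where w0: "w0 \<in> K" "0 \<le> lam"
    and bound: "\<And>i. i \<in> F \<Longrightarrow> norm (w0 - c i) \<le> lam * norm (z - p i)"
    and minimal: "\<And>w. w \<in> K \<Longrightarrow> \<exists>i\<in>F. lam * norm (z - p i) \<le> norm (w - c i)"
    using minimax_ratio_point[where r = "\<lambda>i. norm (z - p i)" and c = c,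
        OF \<open>finite F\<close> \<open>F \<noteq> {}\<close> r_pos \<open>compact K\<close> \<open>K \<noteq> {}\<close>] by blast
  define A where "A = {i\<in>F. norm (w0 - c i) = lam * norm (z - p i)}"
  have "w0 \<in> convex hull (c ` A)"
    unfolding A_def by (rule minimax_point_in_active_hull) fact+
  moreover have "A \<noteq> {}" using minimal[OF w0(1)] bound unfolding A_def by force
  ultimately have "lam \<le> 1"
  proof (intro hull_dist_ratio_le_1[where p = p and z = z])
    show "finite A" using \<open>finite F\<close> unfolding A_def by simp
    show "norm (c i - c j) \<le> norm (p i - p j)" if "i \<in> A" "j \<in> A" for i j
      using expand that unfolding A_def by blast
    show "norm (c i - w0) = lam * norm (p i - z)" if "i \<in> A" for i
      using that unfolding A_def by (simp add: norm_minus_commute)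
    show "p i \<noteq> z" if "i \<in> A" for i
      using r_pos[of i] that unfolding A_def by auto
  qed (use w0(2) in auto)
  hence "norm (w0 - c i) \<le> norm (z - p i)" if "i \<in> F" for i
    using bound[OF that] mult_right_mono[of lam 1 "norm (z - p i)"] by simp
  thus ?thesis by blast
qed

lemma kirszbraun:
  fixes c p :: "'i \<Rightarrow> 'a::{real_inner,complete_space}"
  assumes "\<And>i j. i \<in> I \<Longrightarrow> j \<in> I \<Longrightarrow> norm (c i - c j) \<le> norm (p i - p j)"
  shows "\<exists>w. \<forall>i\<in>I. norm (w - c i) \<le> norm (z - p i)"
proof (cases "I = {}")
  case False
  then obtain i0 where "i0 \<in> I" by blast
  have "(\<Inter>i\<in>I. cball (c i) (norm (z - p i))) \<noteq> {}"
  proof (rule closed_convex_Inter_nonempty[OF _ _ \<open>i0 \<in> I\<close>])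
    fix F assume "finite F" "F \<subseteq> I"
    then obtain w where "\<forall>i\<in>F. norm (w - c i) \<le> norm (z - p i)"
      using kirszbraun_finite[of F c p z] assms by blast
    hence "w \<in> (\<Inter>i\<in>F. cball (c i) (norm (z - p i)))" by (simp add: dist_norm norm_minus_commute)
    thus "(\<Inter>i\<in>F. cball (c i) (norm (z - p i))) \<noteq> {}" by blast
  qed auto
  then obtain w where "\<forall>i\<in>I. dist (c i) w \<le> norm (z - p i)" by auto
  hence "\<forall>i\<in>I. norm (w - c i) \<le> norm (z - p i)" by (simp add: dist_norm norm_minus_commute)
  thus ?thesis by blast
qed simp

lemma maximal_monotone_imp_monotone: "maximal_monotone A \<Longrightarrow> monotone_op A"
  unfolding maximal_monotone_def by simp

lemma maximal_monotone_memI: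
  assumes "maximal_monotone A" and "\<And>x u. u \<in> A x \<Longrightarrow> 0 \<le> inner (y - x) (v - u)"
  shows "v \<in> A y"
proof -
  define B where "B = A(y := insert v (A y))"
  have B_iff: "u \<in> B x \<longleftrightarrow> u \<in> A x \<or> (x = y \<and> u = v)" for x u
    unfolding B_def by auto
  have mono_A: "monotone_op A" using maximal_monotone_imp_monotone[OF assms(1)] .
  have swap: "inner (x - x') (u - u') = inner (x' - x) (u' - u)" for x x' u u' :: 'a
    by (simp add: inner_diff_left inner_diff_right algebra_simps)
  have "monotone_op B"
    unfolding monotone_op_def B_iff
    using mono_A assms(2) swap unfolding monotone_op_def by (metis order_refl inner_zero_left diff_self)
  moreover have "\<forall>x. A x \<subseteq> B x" unfolding B_def by auto
  ultimately have "B = A" using assms(1) unfolding maximal_monotone_def by blast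
  thus ?thesis using B_iff[of v y] by simp
qed

text \<open>Monotonicity makes \<open>a - lam u \<mapsto> a + lam u\<close> expansive on the graph of \<open>A\<close>. Extending the
  inverse contraction to \<open>z\<close> by Kirszbraun's theorem gives a point \<open>w\<close>, and
  \<open>((z + w) / 2, (z - w) / (2 lam))\<close> is monotonically related to the whole graph, hence in it.\<close>

theorem minty_surjective:
  fixes A :: "'a::{real_inner,complete_space} \<Rightarrow> 'a set"
  assumes "maximal_monotone A" "0 < lam"
  shows "\<exists>y. \<exists>u\<in>A y. z = y + lam *\<^sub>R u"
proof -
  have mono_A: "monotone_op A" using maximal_monotone_imp_monotone[OF assms(1)] .
  define c where "c i = fst i - lam *\<^sub>R snd i" for i :: "'a \<times> 'a"
  define p where "p i = fst i + lam *\<^sub>R snd i" for i :: "'a \<times> 'a"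
  have expand: "norm (c (a, u) - c (b, v)) \<le> norm (p (a, u) - p (b, v))"
    if "u \<in> A a" "v \<in> A b" for a u b v
  proof -
    have c_diff: "c (a, u) - c (b, v) = (a - b) - lam *\<^sub>R (u - v)"
      and p_diff: "p (a, u) - p (b, v) = (a - b) + lam *\<^sub>R (u - v)"
      unfolding c_def p_def by (simp_all add: algebra_simps)
    have "0 \<le> inner (a - b) (u - v)" using mono_A that unfolding monotone_op_def by blast
    hence "0 \<le> 4 * lam * inner (a - b) (u - v)" using assms(2) by (simp add: zero_le_mult_iff)
    moreover have "norm (c (a, u) - c (b, v))^2
        = norm (p (a, u) - p (b, v))^2 - 4 * lam * inner (a - b) (u - v)"
      unfolding c_diff p_diff power2_norm_diff power2_norm_add by simp
    ultimately have "norm (c (a, u) - c (b, v))^2 \<le> norm (p (a, u) - p (b, v))^2" by simp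
    thus ?thesis by (rule power2_le_imp_le) simp
  qed
  have "\<exists>w. \<forall>i\<in>{(a, u). u \<in> A a}. norm (w - c i) \<le> norm (z - p i)"
    by (rule kirszbraun) (auto intro: expand)
  then obtain w where w: "\<And>a u. u \<in> A a \<Longrightarrow> norm (w - c (a, u)) \<le> norm (z - p (a, u))"
    by auto
  define y where "y = (1/2) *\<^sub>R (z + w)"
  define v where "v = (1 / (2 * lam)) *\<^sub>R (z - w)"
  have "0 \<le> inner (y - a) (v - u)" if "u \<in> A a" for a u
  proof -
    define X Y where "X = z - p (a, u)" and "Y = w - c (a, u)"
    have ya: "y - a = (1/2) *\<^sub>R (X + Y)" and vu: "lam *\<^sub>R (v - u) = (1/2) *\<^sub>R (X - Y)"
      unfolding X_def Y_def y_def v_def c_def p_def using assms(2)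
      by (auto simp: algebra_simps simp flip: scaleR_add_left)
    have "lam * inner (y - a) (v - u) = inner ((1/2) *\<^sub>R (X + Y)) ((1/2) *\<^sub>R (X - Y))"
      by (simp flip: ya vu)
    also have "\<dots> = (norm X^2 - norm Y^2) / 4"
      by (simp add: power2_norm_eq_inner inner_add_left inner_diff_right inner_commute algebra_simps)
    also have "\<dots> \<ge> 0" using w[OF that] unfolding X_def Y_def by (simp add: power_mono)
    finally show ?thesis using assms(2) by (simp add: zero_le_mult_iff)
  qed
  hence "v \<in> A y" by (rule maximal_monotone_memI[OF assms(1)])
  moreover have "z = y + lam *\<^sub>R v" unfolding y_def v_def using assms(2)
    by (simp add: algebra_simps flip: scaleR_add_left)
  ultimately show ?thesis by blast
qed

section \<open>The resolvent\<close>

lemma monotone_op_resolvent_unique: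
  assumes "monotone_op A" "0 < lam" "u \<in> A y" "x = y + lam *\<^sub>R u" "u' \<in> A y'" "x = y' + lam *\<^sub>R u'"
  shows "y = y'"
proof -
  have "lam *\<^sub>R (u - u') = y' - y" using assms(4,6) by (simp add: algebra_simps)
  hence "lam * inner (y - y') (u - u') = - (norm (y - y')^2)"
    by (metis inner_minus_right inner_scaleR_right minus_diff_eq power2_norm_eq_inner)
  moreover have "0 \<le> inner (y - y') (u - u')" using assms(1,3,5) unfolding monotone_op_def by blast
  hence "0 \<le> lam * inner (y - y') (u - u')" using assms(2) by simp
  ultimately have "norm (y - y')^2 \<le> 0" by linarith
  thus ?thesis by simp
qed

lemma nonneg_le_of_square_le_mult:
  fixes N R :: real
  assumes "N^2 \<le> N * R" "0 \<le> N" "0 \<le> R"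
  shows "N \<le> R"
  using assms by (cases "N = 0") (auto simp: power2_eq_square mult_le_cancel_left)

definition resolvent_gap :: "('a::real_inner \<Rightarrow> 'a set) \<Rightarrow> real \<Rightarrow> 'a \<Rightarrow> real" where
  "resolvent_gap A lam x = norm (x - resolvent A lam x)"

context
  fixes A :: "'a::{real_inner,complete_space} \<Rightarrow> 'a set"
  assumes maximal: "maximal_monotone A"
begin

lemma resolvent_eqI:
  assumes "0 < lam" "u \<in> A y" "x = y + lam *\<^sub>R u"
  shows "resolvent A lam x = y"
  unfolding resolvent_def
  using monotone_op_resolvent_unique[OF maximal_monotone_imp_monotone[OF maximal] assms(1)] assms(2,3)
  by blast

lemma resolvent_mem:
  assumes "0 < lam"
  shows "(1/lam) *\<^sub>R (x - resolvent A lam x) \<in> A (resolvent A lam x)"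
proof -
  obtain y u where "u \<in> A y" "x = y + lam *\<^sub>R u" using minty_surjective[OF maximal assms] by blast
  moreover from this have "resolvent A lam x = y" by (rule resolvent_eqI[OF assms])
  ultimately show ?thesis using assms by simp
qed

lemma resolvent_monotone_inner:
  assumes "0 < lam" "0 < mu"
  shows "0 \<le> inner (resolvent A lam x - resolvent A mu y)
                ((1/lam) *\<^sub>R (x - resolvent A lam x) - (1/mu) *\<^sub>R (y - resolvent A mu y))"
  using maximal_monotone_imp_monotone[OF maximal] resolvent_mem[OF assms(1), of x]
    resolvent_mem[OF assms(2), of y]
  unfolding monotone_op_def by blast

lemma resolvent_firmly_nonexpansive:
  assumes "0 < lam"
  shows "norm (resolvent A lam x - resolvent A lam y)^2
          \<le> inner (resolvent A lam x - resolvent A lam y) (x - y)"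
proof -
  define d where "d = resolvent A lam x - resolvent A lam y"
  have "0 \<le> (1/lam) * inner d ((x - y) - d)"
    using resolvent_monotone_inner[OF assms assms, of x y] unfolding d_def
    by (simp add: algebra_simps inner_diff_right)
  hence "0 \<le> inner d ((x - y) - d)" using assms by (simp add: zero_le_divide_iff)
  thus ?thesis unfolding d_def[symmetric] by (simp add: inner_diff_right power2_norm_eq_inner)
qed

lemma resolvent_nonexpansive:
  assumes "0 < lam"
  shows "norm (resolvent A lam x - resolvent A lam y) \<le> norm (x - y)"
proof (rule nonneg_le_of_square_le_mult)
  show "norm (resolvent A lam x - resolvent A lam y)^2
        \<le> norm (resolvent A lam x - resolvent A lam y) * norm (x - y)"
    using resolvent_firmly_nonexpansive[OF assms] norm_cauchy_schwarz order_trans by blast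
qed auto

lemma resolvent_complement_nonexpansive:
  assumes "0 < lam"
  shows "norm ((x - resolvent A lam x) - (y - resolvent A lam y)) \<le> norm (x - y)"
proof -
  define d where "d = resolvent A lam x - resolvent A lam y"
  have "(x - resolvent A lam x) - (y - resolvent A lam y) = (x - y) - d" unfolding d_def by simp
  hence "norm ((x - resolvent A lam x) - (y - resolvent A lam y))^2
      = norm (x - y)^2 - 2 * inner (x - y) d + norm d^2"
    by (simp only: power2_norm_diff)
  also have "\<dots> \<le> norm (x - y)^2"
    using resolvent_firmly_nonexpansive[OF assms, of x y] zero_le_power2[of "norm d"]
    unfolding d_def[symmetric] inner_commute[of d] by linarith
  finally show ?thesis by (rule power2_le_imp_le) simp
qed

lemma resolvent_eq_self_iff:
  assumes "0 < lam"
  shows "resolvent A lam x = x \<longleftrightarrow> 0 \<in> A x"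
  using resolvent_mem[OF assms, of x] resolvent_eqI[OF assms, of 0 x x] by auto

lemma resolvent_parameter_dist:
  assumes "0 < lam" "0 < mu"
  shows "norm (resolvent A lam x - resolvent A mu x)
          \<le> \<bar>mu - lam\<bar> / mu * norm (x - resolvent A mu x)"
proof (rule nonneg_le_of_square_le_mult)
  define y y' where "y = resolvent A lam x" and "y' = resolvent A mu x"
  have "(1/lam) *\<^sub>R (x - y) - (1/mu) *\<^sub>R (x - y') = (1/lam) *\<^sub>R (y' - y) + (1/lam - 1/mu) *\<^sub>R (x - y')"
    by (simp add: algebra_simps)
  hence "0 \<le> (1/lam) * inner (y - y') (y' - y) + (1/lam - 1/mu) * inner (y - y') (x - y')"
    using resolvent_monotone_inner[OF assms, of x x] unfolding y_def[symmetric] y'_def[symmetric]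
    by (simp add: inner_add_right)
  moreover have "inner (y - y') (y' - y) = - (norm (y - y')^2)"
    by (simp add: power2_norm_eq_inner inner_diff_left inner_diff_right inner_commute)
  ultimately have "(1/lam) * norm (y - y')^2 \<le> (1/lam - 1/mu) * inner (y - y') (x - y')"
    by simp
  hence "lam * ((1/lam) * norm (y - y')^2) \<le> lam * ((1/lam - 1/mu) * inner (y - y') (x - y'))"
    using assms(1) by (intro mult_left_mono) auto
  moreover have "lam * ((1/lam) * N) = N" for N :: real using assms(1) by simp
  moreover have "lam * ((1/lam - 1/mu) * I) = ((mu - lam) / mu) * I" for I :: real
    using assms by (simp add: field_simps)
  ultimately have "norm (y - y')^2 \<le> ((mu - lam) / mu) * inner (y - y') (x - y')"
    by metis
  also have "\<dots> \<le> \<bar>(mu - lam) / mu\<bar> * \<bar>inner (y - y') (x - y')\<bar>"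
    by (metis abs_ge_self abs_mult)
  also have "\<dots> \<le> \<bar>(mu - lam) / mu\<bar> * (norm (y - y') * norm (x - y'))"
    by (intro mult_left_mono Cauchy_Schwarz_ineq2) auto
  finally show "norm (y - y')^2 \<le> norm (y - y') * (\<bar>mu - lam\<bar> / mu * norm (x - y'))"
    using assms(2) by (simp add: abs_div mult_ac)
qed (use assms in auto)

lemma resolvent_gap_mono:
  assumes "0 < lam" "lam \<le> mu"
  shows "resolvent_gap A lam x \<le> resolvent_gap A mu x"
proof -
  have mu: "0 < mu" using assms by simp
  define a b where "a = x - resolvent A lam x" and "b = x - resolvent A mu x"
  have "0 \<le> inner (b - a) ((1/lam) *\<^sub>R a - (1/mu) *\<^sub>R b)"
    using resolvent_monotone_inner[OF assms(1) mu, of x x] unfolding a_def b_def by simp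
  hence "(1/lam) * norm a^2 + (1/mu) * norm b^2 \<le> (1/lam + 1/mu) * inner a b"
    by (simp add: power2_norm_eq_inner inner_diff_left inner_diff_right inner_commute algebra_simps)
  also have "\<dots> \<le> (1/lam + 1/mu) * (norm a * norm b)"
    using assms mu by (intro mult_left_mono norm_cauchy_schwarz) auto
  finally have "(lam * mu) * ((1/lam) * norm a^2 + (1/mu) * norm b^2)
      \<le> (lam * mu) * ((1/lam + 1/mu) * (norm a * norm b))"
    using assms(1) mu by (intro mult_left_mono) auto
  moreover have "(lam * mu) * ((1/lam) * P + (1/mu) * Q) = mu * P + lam * Q" for P Q :: real
    using assms(1) mu by (simp add: field_simps)
  moreover have "(lam * mu) * ((1/lam + 1/mu) * P) = (mu + lam) * P" for P :: real
    using assms(1) mu by (simp add: field_simps)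
  ultimately have "mu * norm a^2 + lam * norm b^2 \<le> (mu + lam) * (norm a * norm b)"
    by simp
  hence "(norm a - norm b) * (mu * norm a - lam * norm b) \<le> 0"
    by (simp add: power2_eq_square algebra_simps)
  show ?thesis unfolding resolvent_gap_def a_def[symmetric] b_def[symmetric]
  proof (rule ccontr)
    assume "\<not> norm a \<le> norm b"
    hence "lam * norm b < lam * norm a" "lam * norm a \<le> mu * norm a"
      using assms by (auto intro: mult_right_mono)
    hence "0 < (norm a - norm b) * (mu * norm a - lam * norm b)"
      using \<open>\<not> norm a \<le> norm b\<close> by (intro mult_pos_pos) auto
    thus False using \<open>(norm a - norm b) * (mu * norm a - lam * norm b) \<le> 0\<close> by simp
  qed
qed

lemma resolvent_gap_pos_iff:
  assumes "0 < lam"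
  shows "0 < resolvent_gap A lam x \<longleftrightarrow> 0 \<notin> A x"
  using resolvent_eq_self_iff[OF assms, of x] unfolding resolvent_gap_def by auto

lemma resolvent_gap_lipschitz:
  assumes "0 < lam"
  shows "\<bar>resolvent_gap A lam x - resolvent_gap A lam y\<bar> \<le> norm (x - y)"
  unfolding resolvent_gap_def
  by (rule order_trans[OF norm_triangle_ineq3 resolvent_complement_nonexpansive[OF assms]])

lemma resolvent_gap_parameter_dist:
  assumes "0 < lam" "0 < mu"
  shows "\<bar>resolvent_gap A lam x - resolvent_gap A mu x\<bar> \<le> \<bar>mu - lam\<bar> / mu * resolvent_gap A mu x"
proof -
  have "\<bar>resolvent_gap A lam x - resolvent_gap A mu x\<bar> \<le> norm (resolvent A lam x - resolvent A mu x)"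
    unfolding resolvent_gap_def using norm_triangle_ineq3[of "x - resolvent A lam x" "x - resolvent A mu x"]
    by (simp add: norm_minus_commute)
  also have "\<dots> \<le> \<bar>mu - lam\<bar> / mu * resolvent_gap A mu x"
    unfolding resolvent_gap_def by (rule resolvent_parameter_dist[OF assms])
  finally show ?thesis .
qed

lemma continuous_on_resolvent_gap:
  assumes "0 < a"
  shows "continuous_on {a..b} (\<lambda>lam. resolvent_gap A lam x)"
proof (rule lipschitz_on_continuous_on)
  show "(resolvent_gap A b x / a)-lipschitz_on {a..b} (\<lambda>lam. resolvent_gap A lam x)"
  proof (rule lipschitz_onI)
    fix l m assume lm: "l \<in> {a..b}" "m \<in> {a..b}"
    have "\<bar>resolvent_gap A l x - resolvent_gap A m x\<bar> \<le> \<bar>m - l\<bar> / m * resolvent_gap A m x"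
      using lm assms by (intro resolvent_gap_parameter_dist) auto
    also have "\<dots> \<le> \<bar>m - l\<bar> / a * resolvent_gap A b x"
    proof (rule mult_mono)
      show "\<bar>m - l\<bar> / m \<le> \<bar>m - l\<bar> / a" using lm assms by (simp add: divide_left_mono)
      show "resolvent_gap A m x \<le> resolvent_gap A b x" using lm assms by (simp add: resolvent_gap_mono)
    qed (use assms in \<open>auto simp: resolvent_gap_def\<close>)
    finally show "dist (resolvent_gap A l x) (resolvent_gap A m x) \<le> resolvent_gap A b x / a * dist l m"
      by (simp add: dist_real_def abs_minus_commute mult_ac)
  qed (use assms in \<open>simp add: resolvent_gap_def\<close>)
qed

end

section \<open>The feedback law\<close>

text \<open>The second closed-loop equation with \<open>n = p - 1\<close>. Its positive root is unique whenever it
  exists, and it exists for \<open>0 \<notin> A x\<close>; elsewhere (for \<open>n > 0\<close>) the value is unspecified.\<close>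

definition feedback_lambda :: "('a::real_inner \<Rightarrow> 'a set) \<Rightarrow> real \<Rightarrow> nat \<Rightarrow> 'a \<Rightarrow> real" where
  "feedback_lambda A \<theta> n x = (THE lam. 0 < lam \<and> lam * resolvent_gap A lam x ^ n = \<theta>)"

definition closed_loop_field :: "('a::real_inner \<Rightarrow> 'a set) \<Rightarrow> real \<Rightarrow> nat \<Rightarrow> 'a \<Rightarrow> 'a" where
  "closed_loop_field A \<theta> n x = resolvent A (feedback_lambda A \<theta> n x) x - x"

context
  fixes A :: "'a::{real_inner,complete_space} \<Rightarrow> 'a set"
  assumes maximal: "maximal_monotone A"
begin

lemma feedback_equation_strict_mono:
  assumes "0 < a" "a < b" "0 < resolvent_gap A a x ^ n"
  shows "a * resolvent_gap A a x ^ n < b * resolvent_gap A b x ^ n"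
proof -
  have "a * resolvent_gap A a x ^ n < b * resolvent_gap A a x ^ n" using assms by simp
  also have "\<dots> \<le> b * resolvent_gap A b x ^ n"
    using assms resolvent_gap_mono[OF maximal, of a b x]
    by (intro mult_left_mono power_mono) (auto simp: resolvent_gap_def)
  finally show ?thesis .
qed

lemma feedback_lambda_eqI:
  assumes "0 < \<theta>" "0 < lam" "lam * resolvent_gap A lam x ^ n = \<theta>"
  shows "feedback_lambda A \<theta> n x = lam"
  unfolding feedback_lambda_def
proof (rule the_equality)
  show "0 < lam \<and> lam * resolvent_gap A lam x ^ n = \<theta>" using assms(2,3) by simp
  have "0 < resolvent_gap A lam x ^ n"
    using zero_less_mult_pos[of lam "resolvent_gap A lam x ^ n"] assms by simp
  hence pos: "0 < resolvent_gap A a x ^ n" if "0 < a" for a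
    using resolvent_gap_pos_iff[OF maximal] assms(2) that
    by (metis power_eq_0_iff zero_less_power less_le resolvent_gap_def norm_ge_zero)
  fix mu assume mu: "0 < mu \<and> mu * resolvent_gap A mu x ^ n = \<theta>"
  show "mu = lam"
    using feedback_equation_strict_mono[of mu lam x n] feedback_equation_strict_mono[of lam mu x n]
      pos[of mu] pos[of lam] mu assms(2,3) by (cases mu lam rule: linorder_cases) auto
qed

lemma feedback_lambda_root:
  assumes "0 < \<theta>" "0 \<notin> A x"
  shows "0 < feedback_lambda A \<theta> n x"
    and "feedback_lambda A \<theta> n x * resolvent_gap A (feedback_lambda A \<theta> n x) x ^ n = \<theta>"
proof -
  define f where "f lam = lam * resolvent_gap A lam x ^ n" for lam
  have gap_pos: "0 < resolvent_gap A lam x" if "0 < lam" for lam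
    using resolvent_gap_pos_iff[OF maximal that] assms(2) by simp
  define l1 where "l1 = min 1 (\<theta> / (resolvent_gap A 1 x ^ n + 1))"
  have "0 < resolvent_gap A 1 x ^ n" using gap_pos[of 1] by simp
  hence l1: "0 < l1" "l1 \<le> 1" unfolding l1_def using assms(1) by auto
  have "f l1 \<le> l1 * resolvent_gap A 1 x ^ n"
    unfolding f_def using l1 resolvent_gap_mono[OF maximal l1(1,2), of x] gap_pos[OF l1(1)]
    by (intro mult_left_mono power_mono) auto
  also have "\<dots> \<le> \<theta>"
    using l1 gap_pos[of 1] assms(1) unfolding l1_def
    by (smt (verit, best) divide_pos_pos mult_left_mono le_divide_eq zero_le_power)
  finally have f1: "f l1 \<le> \<theta>" .
  define l2 where "l2 = l1 + \<theta> / resolvent_gap A l1 x ^ n"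
  have l12: "l1 \<le> l2" unfolding l2_def using assms(1) gap_pos[OF l1(1)] by simp
  have "\<theta> \<le> l2 * resolvent_gap A l1 x ^ n"
    unfolding l2_def using l1 gap_pos[OF l1(1)] by (simp add: distrib_right)
  also have "\<dots> \<le> f l2"
    unfolding f_def using l1 l12 gap_pos[OF l1(1)] resolvent_gap_mono[OF maximal l1(1) l12, of x]
    by (intro mult_left_mono power_mono) auto
  finally have f2: "\<theta> \<le> f l2" .
  have "continuous_on {l1..l2} f"
    unfolding f_def using continuous_on_resolvent_gap[OF maximal l1(1)] by (intro continuous_intros)
  then obtain lam where "l1 \<le> lam" "f lam = \<theta>"
    using IVT'[of f l1 \<theta> l2, OF f1 f2 l12] by blast
  hence "feedback_lambda A \<theta> n x = lam" unfolding f_def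
    using l1(1) by (intro feedback_lambda_eqI assms(1)) auto
  thus "0 < feedback_lambda A \<theta> n x"
    "feedback_lambda A \<theta> n x * resolvent_gap A (feedback_lambda A \<theta> n x) x ^ n = \<theta>"
    using \<open>l1 \<le> lam\<close> \<open>f lam = \<theta>\<close> l1(1) unfolding f_def by auto
qed

text \<open>Bernoulli's inequality turns the defining equation into a one-sided Lipschitz bound
  for the feedback parameter.\<close>

lemma feedback_lambda_step:
  assumes "0 < \<theta>" "0 \<notin> A x" "0 \<notin> A x'"
    and close: "norm (x - x') \<le> resolvent_gap A (feedback_lambda A \<theta> n x) x"
    and le: "feedback_lambda A \<theta> n x \<le> feedback_lambda A \<theta> n x'"
  shows "feedback_lambda A \<theta> n x' * (1 - n * norm (x - x') / resolvent_gap A (feedback_lambda A \<theta> n x) x)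
           \<le> feedback_lambda A \<theta> n x"
proof -
  define L L' where "L = feedback_lambda A \<theta> n x" and "L' = feedback_lambda A \<theta> n x'"
  define D \<delta> where "D = resolvent_gap A L x" and "\<delta> = norm (x - x')"
  note L = feedback_lambda_root[OF assms(1,2), of n, folded L_def D_def]
  note L' = feedback_lambda_root[OF assms(1,3), of n, folded L'_def]
  have D: "0 < D" unfolding D_def using resolvent_gap_pos_iff[OF maximal L(1)] assms(2) by simp
  have "D - \<delta> \<le> resolvent_gap A L' x - \<delta>"
    using resolvent_gap_mono[OF maximal L(1), of L' x] le unfolding D_def L_def L'_def by simp
  also have "\<dots> \<le> resolvent_gap A L' x'"
    using resolvent_gap_lipschitz[OF maximal L'(1), of x x'] unfolding \<delta>_def by simp
  finally have gap': "D - \<delta> \<le> resolvent_gap A L' x'" .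
  define s where "s = \<delta> / D"
  have "\<delta> \<le> D" using close unfolding \<delta>_def D_def L_def .
  hence s: "0 \<le> s" "s \<le> 1" unfolding s_def \<delta>_def using D by auto
  have "L' * (D ^ n * (1 - n * s)) \<le> L' * (D ^ n * (1 - s) ^ n)"
    using Bernoulli_inequality[of "- s" n] s L'(1) D by (intro mult_left_mono) auto
  also have "\<dots> = L' * (D - \<delta>) ^ n" unfolding s_def using D by (simp add: power_mult_distrib field_simps)
  also have "\<dots> \<le> L' * resolvent_gap A L' x' ^ n"
    using gap' \<open>\<delta> \<le> D\<close> L'(1) by (intro mult_left_mono power_mono) auto
  also have "\<dots> = L * D ^ n" using L(2) L'(2) by simp
  finally have "(L' * (1 - n * s)) * D ^ n \<le> L * D ^ n" by (simp add: algebra_simps)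
  hence "L' * (1 - n * s) \<le> L" using D by (simp add: mult_le_cancel_right)
  thus ?thesis unfolding L'_def L_def s_def \<delta>_def D_def by (simp add: mult.assoc)
qed

end

lemma resolvent_residual_dist:
  fixes A :: "'a::{real_inner,complete_space} \<Rightarrow> 'a set"
  assumes "maximal_monotone A" "0 < l" "0 < m"
  shows "norm ((resolvent A l x - x) - (resolvent A m y - y))
           \<le> 2 * norm (x - y) + \<bar>l - m\<bar> / m * resolvent_gap A m y"
proof -
  have split: "(resolvent A l x - x) - (resolvent A m y - y)
      = (resolvent A l x - resolvent A l y) + (resolvent A l y - resolvent A m y) - (x - y)"
    by (simp add: algebra_simps)
  have "norm ((resolvent A l x - x) - (resolvent A m y - y))
      \<le> norm (resolvent A l x - resolvent A l y) + norm (resolvent A l y - resolvent A m y) + norm (x - y)"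
    unfolding split by (rule order_trans[OF norm_triangle_ineq4 add_right_mono[OF norm_triangle_ineq]])
  also have "\<dots> \<le> norm (x - y) + \<bar>m - l\<bar> / m * resolvent_gap A m y + norm (x - y)"
    using resolvent_nonexpansive[OF assms(1,2), of x y] resolvent_parameter_dist[OF assms, of y]
    unfolding resolvent_gap_def by linarith
  finally show ?thesis by (simp add: abs_minus_commute)
qed

locale closed_loop_near =
  fixes A :: "'a::{real_inner,complete_space} \<Rightarrow> 'a set" and \<theta> :: real and n :: nat and z :: 'a
  assumes maximal: "maximal_monotone A" and \<theta>_pos: "0 < \<theta>" and regular: "0 \<notin> A z"
begin

abbreviation lam :: "'a \<Rightarrow> real" where "lam \<equiv> feedback_lambda A \<theta> n"

abbreviation gap :: "'a \<Rightarrow> real" where "gap x \<equiv> resolvent_gap A (lam x) x"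

text \<open>The radius makes the factor \<open>1 - n * norm (z - x) / gap z\<close> of \<open>feedback_lambda_step\<close> at
  least \<open>3/4\<close>, which yields \<open>lam x \<le> 2 * lam z\<close> on the ball.\<close>

definition radius :: real where "radius = gap z / (4 * (n + 1))"

definition gap_bound :: real where "gap_bound = resolvent_gap A (2 * lam z) z + radius"

lemma lam_z: "0 < lam z" "lam z * gap z ^ n = \<theta>"
  using feedback_lambda_root[OF maximal \<theta>_pos regular] by auto

lemma gap_z: "0 < gap z"
  using resolvent_gap_pos_iff[OF maximal lam_z(1)] regular by simp

lemma radius: "0 < radius" "n * radius \<le> gap z / 4" "2 * radius \<le> gap z / 2"
  unfolding radius_def using gap_z by (auto simp: field_simps)

lemma regular_near:
  assumes "x \<in> cball z radius"
  shows "0 \<notin> A x"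
proof -
  have "gap z - norm (z - x) \<le> resolvent_gap A (lam z) x"
    using resolvent_gap_lipschitz[OF maximal lam_z(1), of z x] by simp
  moreover have "norm (z - x) < gap z" using assms radius gap_z by (auto simp: dist_norm)
  ultimately have "0 < resolvent_gap A (lam z) x" by linarith
  thus ?thesis using resolvent_gap_pos_iff[OF maximal lam_z(1)] by simp
qed

lemma lam_near: "x \<in> cball z radius \<Longrightarrow> 0 < lam x \<and> lam x * gap x ^ n = \<theta>"
  using feedback_lambda_root[OF maximal \<theta>_pos regular_near] by blast

lemma lam_near_le:
  assumes "x \<in> cball z radius"
  shows "lam x \<le> 2 * lam z"
proof (cases "lam x \<le> lam z")
  case False
  have "norm (z - x) \<le> radius" using assms by (simp add: dist_norm)
  hence "n * norm (z - x) \<le> n * radius" by (simp add: mult_left_mono)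
  hence "n * norm (z - x) / gap z \<le> 1/4" using radius(2) gap_z by (simp add: divide_le_eq)
  hence "lam x * (3/4) \<le> lam x * (1 - n * norm (z - x) / gap z)"
    using lam_near[OF assms] by (intro mult_left_mono) auto
  also have "\<dots> \<le> lam z"
  proof (rule feedback_lambda_step[OF maximal \<theta>_pos regular regular_near[OF assms], where n = n])
    show "norm (z - x) \<le> resolvent_gap A (lam z) z"
      using \<open>norm (z - x) \<le> radius\<close> radius(3) gap_z by linarith
    show "lam z \<le> lam x" using False by simp
  qed
  finally show ?thesis using lam_z by simp
qed (use lam_z in simp)

lemma gap_near_ge:
  assumes "x \<in> cball z radius"
  shows "gap z / 2 \<le> gap x"
proof (cases "lam z \<le> lam x")
  case True
  have "gap z - radius \<le> resolvent_gap A (lam z) x"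
    using resolvent_gap_lipschitz[OF maximal lam_z(1), of z x] assms by (auto simp: dist_norm)
  also have "\<dots> \<le> gap x" using resolvent_gap_mono[OF maximal lam_z(1) True] .
  finally show ?thesis using radius by simp
next
  case False
  hence "lam x * gap z ^ n < lam z * gap z ^ n" using gap_z by simp
  also have "\<dots> = lam x * gap x ^ n" using lam_z(2) lam_near[OF assms] by simp
  finally have "lam x * gap z ^ n < lam x * gap x ^ n" .
  hence "gap z ^ n < gap x ^ n"
    by (simp only: mult_less_cancel_left_pos[OF conjunct1[OF lam_near[OF assms]]])
  hence "gap z < gap x" by (rule power_less_imp_less_base) (simp add: resolvent_gap_def)
  thus ?thesis using gap_z by simp
qed

lemma gap_near_le:
  assumes "x \<in> cball z radius"
  shows "gap x \<le> gap_bound"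
proof -
  have "gap x \<le> resolvent_gap A (2 * lam z) x"
    using resolvent_gap_mono[OF maximal _ lam_near_le[OF assms]] lam_near[OF assms] by simp
  also have "\<dots> \<le> gap_bound"
    using resolvent_gap_lipschitz[OF maximal, of "2 * lam z" x z] lam_z assms
    unfolding gap_bound_def by (auto simp: dist_norm norm_minus_commute)
  finally show ?thesis .
qed

lemma lam_near_ge:
  assumes "x \<in> cball z radius"
  shows "\<theta> / gap_bound ^ n \<le> lam x"
proof -
  have "0 < gap_bound" using gap_near_le[of z] gap_z radius by simp
  have "gap x ^ n \<le> gap_bound ^ n"
    using gap_near_le[OF assms] by (intro power_mono) (simp_all add: resolvent_gap_def)
  hence "\<theta> \<le> lam x * gap_bound ^ n"
    using lam_near[OF assms] by (metis mult_left_mono less_imp_le)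
  thus ?thesis using \<open>0 < gap_bound\<close> by (simp add: divide_le_eq mult.commute)
qed

lemma lam_lipschitz:
  assumes "x \<in> cball z radius" "y \<in> cball z radius"
  shows "\<bar>lam x - lam y\<bar> \<le> 4 * n * lam z / gap z * norm (x - y)"
proof -
  have half: "lam y - lam x \<le> 4 * n * lam z / gap z * norm (x - y)"
    if "x \<in> cball z radius" "y \<in> cball z radius" "lam x \<le> lam y" for x y
  proof -
    have "norm (x - y) \<le> 2 * radius"
      using that(1,2) dist_triangle[of x y z] by (simp add: dist_norm norm_minus_commute)
    hence close: "norm (x - y) \<le> gap x" using radius(3) gap_near_ge[OF that(1)] by simp
    have "0 < gap x" using gap_near_ge[OF that(1)] gap_z by simp
    have "lam y - lam x \<le> lam y * (n * norm (x - y) / gap x)"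
      using feedback_lambda_step[OF maximal \<theta>_pos regular_near regular_near close that(3)] that
      by (simp add: algebra_simps)
    also have "\<dots> \<le> (2 * lam z) * (n * norm (x - y) / (gap z / 2))"
      using lam_near_le[OF that(2)] gap_near_ge[OF that(1)] gap_z lam_near[OF that(2)]
      by (intro mult_mono divide_left_mono) auto
    also have "\<dots> = 4 * n * lam z / gap z * norm (x - y)" by (simp add: field_simps)
    finally show ?thesis .
  qed
  show ?thesis
    using half[OF assms] half[OF assms(2,1)] by (cases "lam x \<le> lam y") (auto simp: norm_minus_commute)
qed

lemma field_lipschitz:
  assumes "x \<in> cball z radius" "y \<in> cball z radius"
  shows "norm (closed_loop_field A \<theta> n x - closed_loop_field A \<theta> n y)
           \<le> (2 + 4 * n * lam z / gap z * gap_bound ^ Suc n / \<theta>) * norm (x - y)"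
proof -
  define K where "K = 4 * n * lam z / gap z"
  have "0 \<le> K" unfolding K_def using lam_z gap_z by simp
  have "0 < gap_bound" using gap_near_le[of z] gap_z radius by simp
  have "\<bar>lam x - lam y\<bar> / lam y \<le> K * norm (x - y) / (\<theta> / gap_bound ^ n)"
    using lam_lipschitz[OF assms] lam_near_ge[OF assms(2)] \<theta>_pos \<open>0 < gap_bound\<close>
    unfolding K_def by (intro frac_le) auto
  hence "\<bar>lam x - lam y\<bar> / lam y * gap y \<le> K * norm (x - y) / (\<theta> / gap_bound ^ n) * gap_bound"
    using gap_near_le[OF assms(2)] \<open>0 \<le> K\<close> \<theta>_pos \<open>0 < gap_bound\<close>
    by (intro mult_mono) (auto simp: resolvent_gap_def)
  moreover have "norm (closed_loop_field A \<theta> n x - closed_loop_field A \<theta> n y)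
      \<le> 2 * norm (x - y) + \<bar>lam x - lam y\<bar> / lam y * gap y"
    unfolding closed_loop_field_def
    using resolvent_residual_dist[OF maximal conjunct1[OF lam_near[OF assms(1)]] conjunct1[OF lam_near[OF assms(2)]]] .
  ultimately show ?thesis using \<theta>_pos unfolding K_def by (simp add: field_simps)
qed

end

lemma closed_loop_field_local_lipschitz:
  fixes A :: "'a::{real_inner,complete_space} \<Rightarrow> 'a set"
  assumes "maximal_monotone A" "0 < \<theta>" "0 \<notin> A z"
  obtains r K M where "0 < r" "\<And>x. x \<in> cball z r \<Longrightarrow> 0 \<notin> A x"
    "\<And>x. x \<in> cball z r \<Longrightarrow> norm (closed_loop_field A \<theta> n x) \<le> M"
    "K-lipschitz_on (cball z r) (closed_loop_field A \<theta> n)"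
    "K-lipschitz_on (cball z r) (feedback_lambda A \<theta> n)"
proof -
  interpret closed_loop_near A \<theta> n z by unfold_locales fact+
  define K1 K2 where "K1 = 4 * n * lam z / gap z" and "K2 = 2 + K1 * gap_bound ^ Suc n / \<theta>"
  have "0 \<le> K1" unfolding K1_def using lam_z gap_z by simp
  show ?thesis
  proof (rule that[OF radius(1) regular_near, of gap_bound "max K1 K2"])
    show "norm (closed_loop_field A \<theta> n x) \<le> gap_bound" if "x \<in> cball z radius" for x
      using gap_near_le[OF that] unfolding closed_loop_field_def resolvent_gap_def
      by (simp add: norm_minus_commute)
    show "(max K1 K2)-lipschitz_on (cball z radius) (closed_loop_field A \<theta> n)"
    proof (rule lipschitz_onI)
      fix x y assume "x \<in> cball z radius" "y \<in> cball z radius"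
      thus "dist (closed_loop_field A \<theta> n x) (closed_loop_field A \<theta> n y) \<le> max K1 K2 * dist x y"
        using field_lipschitz[of x y] mult_right_mono[of K2 "max K1 K2" "norm (x - y)"]
        unfolding K1_def K2_def dist_norm by (simp add: mult_ac)
    qed (use \<open>0 \<le> K1\<close> in simp)
    show "(max K1 K2)-lipschitz_on (cball z radius) lam"
    proof (rule lipschitz_onI)
      fix x y assume "x \<in> cball z radius" "y \<in> cball z radius"
      thus "dist (lam x) (lam y) \<le> max K1 K2 * dist x y"
        using lam_lipschitz[of x y] mult_right_mono[of K1 "max K1 K2" "norm (x - y)"]
        unfolding K1_def dist_norm dist_real_def by simp
    qed (use \<open>0 \<le> K1\<close> in simp)
  qed
qed

section \<open>Local solutions of Lipschitz differential equations\<close>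

primrec picard_iterate :: "('a::real_normed_vector \<Rightarrow> 'a) \<Rightarrow> 'a \<Rightarrow> nat \<Rightarrow> real \<Rightarrow> 'a" where
  "picard_iterate F x0 0 = (\<lambda>t. x0)"
| "picard_iterate F x0 (Suc k) = (\<lambda>t. x0 + integral {0..t} (\<lambda>s. F (picard_iterate F x0 k s)))"

locale picard_setting =
  fixes F :: "'a::banach \<Rightarrow> 'a" and x0 :: 'a and r L M T :: real
  assumes r_pos: "0 < r" and T_pos: "0 < T" and T_M: "T * M \<le> r" and T_L: "T * L \<le> 1/2"
    and lipschitz: "L-lipschitz_on (cball x0 r) F"
    and bounded: "\<And>x. x \<in> cball x0 r \<Longrightarrow> norm (F x) \<le> M"
begin

abbreviation P :: "nat \<Rightarrow> real \<Rightarrow> 'a" where "P \<equiv> picard_iterate F x0"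

lemma F_continuous: "continuous_on (cball x0 r) F"
  using lipschitz by (rule lipschitz_on_continuous_on)

lemma M_nonneg: "0 \<le> M"
  using order_trans[OF norm_ge_zero bounded[of x0]] r_pos by simp

lemma integral_curve_derivative:
  assumes "continuous_on {0..T} g" "t \<in> {0..T}"
  shows "((\<lambda>u. x0 + integral {0..u} g) has_vector_derivative g t) (at t within {0..T})"
  using integral_has_vector_derivative[OF assms] by (auto intro!: derivative_eq_intros)

lemma iterate_in_ball: "continuous_on {0..T} (P k) \<and> (\<forall>t\<in>{0..T}. P k t \<in> cball x0 r)"
proof (induction k)
  case 0 thus ?case using r_pos by simp
next
  case (Suc k)
  define g where "g s = F (P k s)" for s
  have g: "continuous_on {0..T} g" unfolding g_def
    using continuous_on_compose2[OF F_continuous] Suc by blast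
  have P_Suc: "P (Suc k) = (\<lambda>u. x0 + integral {0..u} g)" unfolding g_def by simp
  have "continuous_on {0..T} (P (Suc k))"
    unfolding P_Suc continuous_on_eq_continuous_within
    using integral_curve_derivative[OF g] has_vector_derivative_continuous by blast
  moreover have "P (Suc k) t \<in> cball x0 r" if "t \<in> {0..T}" for t
  proof -
    have "norm (integral {0..t} g) \<le> M * (t - 0)"
      using that g bounded Suc unfolding g_def
      by (intro integral_bound) (auto intro: continuous_on_subset)
    also have "\<dots> \<le> M * T" using that M_nonneg by (intro mult_left_mono) auto
    also have "\<dots> \<le> r" using T_M by (simp add: mult.commute)
    finally show ?thesis unfolding P_Suc by (simp add: dist_norm)
  qed
  ultimately show ?case by blast
qed

lemma iterate_continuous: "continuous_on {0..T} (\<lambda>s. F (P k s))"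
  using continuous_on_compose2[OF F_continuous] iterate_in_ball by blast

lemma integral_contraction:
  assumes "t \<in> {0..T}" "continuous_on {0..T} u" "continuous_on {0..T} v"
    and "\<And>s. s \<in> {0..T} \<Longrightarrow> u s \<in> cball x0 r \<and> v s \<in> cball x0 r \<and> norm (u s - v s) \<le> B"
  shows "norm (integral {0..t} (\<lambda>s. F (u s)) - integral {0..t} (\<lambda>s. F (v s))) \<le> B / 2"
proof -
  have sub: "{0..t} \<subseteq> {0..T}" using assms(1) by auto
  have "norm (u 0 - v 0) \<le> B" using assms(4)[of 0] T_pos by simp
  hence B: "0 \<le> B" by (rule order_trans[OF norm_ge_zero])
  have cont: "continuous_on {0..T} (\<lambda>s. F (w s))" if "continuous_on {0..T} w"
    "\<And>s. s \<in> {0..T} \<Longrightarrow> w s \<in> cball x0 r" for w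
    using continuous_on_compose2[OF F_continuous that(1)] that(2) by blast
  have "integral {0..t} (\<lambda>s. F (u s) - F (v s))
      = integral {0..t} (\<lambda>s. F (u s)) - integral {0..t} (\<lambda>s. F (v s))"
    using cont[OF assms(2)] cont[OF assms(3)] assms(4) sub
    by (intro integral_diff integrable_continuous_real) (auto intro: continuous_on_subset)
  moreover have "norm (integral {0..t} (\<lambda>s. F (u s) - F (v s))) \<le> (L * B) * (t - 0)"
  proof (rule integral_bound)
    show "continuous_on {0..t} (\<lambda>s. F (u s) - F (v s))"
      using cont[OF assms(2)] cont[OF assms(3)] assms(4) sub
      by (auto intro!: continuous_intros intro: continuous_on_subset)
    fix s assume "s \<in> {0..t}"
    hence "s \<in> {0..T}" using sub by auto
    hence "norm (F (u s) - F (v s)) \<le> L * norm (u s - v s)"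
      using lipschitz_onD[OF lipschitz] assms(4) by (simp add: dist_norm)
    also have "\<dots> \<le> L * B"
      using \<open>s \<in> {0..T}\<close> assms(4) lipschitz_on_nonneg[OF lipschitz] by (intro mult_left_mono) auto
    finally show "norm (F (u s) - F (v s)) \<le> L * B" .
  qed (use assms(1) in auto)
  moreover have "(L * B) * (t - 0) \<le> (T * L) * B"
    using assms(1) lipschitz_on_nonneg[OF lipschitz] B by (simp add: mult_left_mono mult_ac)
  moreover have "(T * L) * B \<le> (1/2) * B" using T_L B by (rule mult_right_mono)
  ultimately show ?thesis by simp
qed

lemma iterate_step:
  assumes "t \<in> {0..T}"
  shows "norm (P (Suc k) t - P k t) \<le> r * (1/2)^k"
  using assms
proof (induction k arbitrary: t)
  case 0
  thus ?case using iterate_in_ball[of 1] by (auto simp: dist_norm norm_minus_commute)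
next
  case (Suc k)
  have "norm (P (Suc (Suc k)) t - P (Suc k) t)
      = norm (integral {0..t} (\<lambda>s. F (P (Suc k) s)) - integral {0..t} (\<lambda>s. F (P k s)))"
    by simp
  also have "\<dots> \<le> r * (1/2)^k / 2"
    using Suc iterate_in_ball[of "Suc k"] iterate_in_ball[of k] by (intro integral_contraction) auto
  finally show ?case by simp
qed

lemma iterate_uniform_limit:
  obtains \<phi> where "uniform_limit {0..T} P \<phi> sequentially"
proof -
  define D where "D i t = P (Suc i) t - P i t" for i t
  have "uniform_limit {0..T} (\<lambda>n t. \<Sum>i<n. D i t) (\<lambda>t. \<Sum>i. D i t) sequentially"
    using iterate_step unfolding D_def
    by (intro Weierstrass_m_test[where M = "\<lambda>i. r * (1/2)^i"] summable_mult summable_geometric) auto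
  hence "uniform_limit {0..T} (\<lambda>n t. x0 + (\<Sum>i<n. D i t)) (\<lambda>t. x0 + (\<Sum>i. D i t)) sequentially"
    by (intro uniform_limit_add uniform_limit_const)
  moreover have "x0 + (\<Sum>i<n. D i t) = P n t" for n t
    unfolding D_def sum_lessThan_telescope[of "\<lambda>i. P i t" n] by simp
  ultimately show ?thesis using that by simp
qed

lemma local_solution:
  obtains x where "x 0 = x0"
    and "\<And>t. t \<in> {0..T} \<Longrightarrow> x t \<in> cball x0 r \<and> (x has_vector_derivative F (x t)) (at t within {0..T})"
proof -
  obtain \<phi> where \<phi>: "uniform_limit {0..T} P \<phi> sequentially" by (rule iterate_uniform_limit)
  have lim: "(\<lambda>k. P k t) \<longlonglongrightarrow> \<phi> t" if "t \<in> {0..T}" for t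
    using tendsto_uniform_limitI[OF \<phi> that] .
  have in_ball: "\<phi> t \<in> cball x0 r" if "t \<in> {0..T}" for t
    using closed_sequentially[OF closed_cball _ lim[OF that]] iterate_in_ball that by blast
  have cont: "continuous_on {0..T} \<phi>"
    using uniform_limit_theorem[OF _ \<phi>] iterate_in_ball by (auto intro: always_eventually)
  have F\<phi>: "continuous_on {0..T} (\<lambda>s. F (\<phi> s))"
    using continuous_on_compose2[OF F_continuous cont] in_ball by blast
  have F_lim: "uniform_limit {0..T} (\<lambda>k s. F (P k s)) (F \<circ> \<phi>) sequentially"
    using lipschitz_on_uniformly_continuous[OF lipschitz] iterate_in_ball in_ball
    by (intro uniform_limit_compose[OF \<phi>]) (auto intro: always_eventually)
  have integral_eq: "\<phi> t = x0 + integral {0..t} (\<lambda>s. F (\<phi> s))" if "t \<in> {0..T}" for t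
  proof -
    have "uniform_limit {0..t} (\<lambda>k s. F (P k s)) (F \<circ> \<phi>) sequentially"
      by (rule uniform_limit_on_subset[OF F_lim]) (use that in auto)
    moreover have "continuous_on {0..t} (\<lambda>s. F (P k s))" for k
      by (rule continuous_on_subset[OF iterate_continuous]) (use that in auto)
    ultimately obtain I J where I: "\<And>k. ((\<lambda>s. F (P k s)) has_integral I k) {0..t}"
      and J: "((F \<circ> \<phi>) has_integral J) {0..t}" and IJ: "I \<longlonglongrightarrow> J"
      by (rule uniform_limit_integral) (simp, blast)
    have "(\<lambda>k. P (Suc k) t) = (\<lambda>k. x0 + I k)" using integral_unique[OF I] by simp
    hence "(\<lambda>k. P (Suc k) t) \<longlonglongrightarrow> x0 + J" using tendsto_add[OF tendsto_const IJ] by simp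
    moreover have "(\<lambda>k. P (Suc k) t) \<longlonglongrightarrow> \<phi> t" using LIMSEQ_Suc[OF lim[OF that]] .
    ultimately have "\<phi> t = x0 + J" by (rule LIMSEQ_unique[rotated])
    thus ?thesis using integral_unique[OF J] by (simp add: comp_def)
  qed
  show ?thesis
  proof (rule that)
    show "\<phi> 0 = x0" using integral_eq[of 0] T_pos by simp
    fix t assume t: "t \<in> {0..T}"
    have "(\<phi> has_vector_derivative F (\<phi> t)) (at t within {0..T})"
      using has_vector_derivative_transform[OF t integral_eq integral_curve_derivative[OF F\<phi> t]] .
    thus "\<phi> t \<in> cball x0 r \<and> (\<phi> has_vector_derivative F (\<phi> t)) (at t within {0..T})"
      using in_ball[OF t] by blast
  qed
qed

end

lemma ode_local_existence_banach:
  fixes F :: "'a::banach \<Rightarrow> 'a"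
  assumes "0 < r" "L-lipschitz_on (cball x0 r) F" "\<And>x. x \<in> cball x0 r \<Longrightarrow> norm (F x) \<le> M"
  shows "\<exists>T>0. \<exists>x. x 0 = x0 \<and>
           (\<forall>t\<in>{0..T}. x t \<in> cball x0 r \<and> (x has_vector_derivative F (x t)) (at t within {0..T}))"
proof -
  define T where "T = min (r / max M 1) (1 / (2 * max L 1))"
  have "0 < T" unfolding T_def using assms(1) by simp
  moreover have "T * max M 1 \<le> r" "T * max L 1 \<le> 1/2"
    unfolding T_def using assms(1) by (auto simp: min_def field_simps)
  moreover have "(max L 1)-lipschitz_on (cball x0 r) F"
    using assms(2) by (rule lipschitz_on_le) simp
  moreover have "norm (F x) \<le> max M 1" if "x \<in> cball x0 r" for x using assms(3)[OF that] by simp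
  ultimately interpret picard_setting F x0 r "max L 1" "max M 1" T
    using assms(1) by unfold_locales auto
  obtain x where "x 0 = x0"
    "\<And>t. t \<in> {0..T} \<Longrightarrow> x t \<in> cball x0 r \<and> (x has_vector_derivative F (x t)) (at t within {0..T})"
    using local_solution by metis
  thus ?thesis using T_pos by blast
qed

text \<open>The sort \<open>{real_normed_vector, complete_space}\<close> is not a subsort of \<open>banach\<close>, which
  the integral requires. A product of two complete normed spaces is an instance of \<open>banach\<close>,
  so the equation is solved in \<open>'a \<times> 'a\<close> for the field \<open>(x, v) \<mapsto> (F x, 0)\<close>.\<close>

instance prod :: ("{real_normed_vector,complete_space}", "{real_normed_vector,complete_space}") banach
  by intro_classes

lemma ode_local_existence:
  fixes F :: "'a::{real_normed_vector,complete_space} \<Rightarrow> 'a"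
  assumes "0 < r" "L-lipschitz_on (cball x0 r) F" "\<And>x. x \<in> cball x0 r \<Longrightarrow> norm (F x) \<le> M"
  shows "\<exists>T>0. \<exists>x. x 0 = x0 \<and>
           (\<forall>t\<in>{0..T}. x t \<in> cball x0 r \<and> (x has_vector_derivative F (x t)) (at t within {0..T}))"
proof -
  define G where "G p = (F (fst p), 0::'a)" for p :: "'a \<times> 'a"
  have fst_in: "fst p \<in> cball x0 r" if "p \<in> cball (x0, 0) r" for p :: "'a \<times> 'a"
    using that dist_fst_le[of p "(x0, 0)"] by (simp add: dist_commute)
  have "L-lipschitz_on (cball (x0, 0::'a) r) G"
  proof (rule lipschitz_onI)
    fix p q :: "'a \<times> 'a" assume "p \<in> cball (x0, 0) r" "q \<in> cball (x0, 0) r"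
    hence "dist (G p) (G q) \<le> L * dist (fst p) (fst q)"
      using lipschitz_onD[OF assms(2) fst_in fst_in] unfolding G_def by (simp add: dist_Pair_Pair)
    also have "\<dots> \<le> L * dist p q"
      using lipschitz_on_nonneg[OF assms(2)] dist_fst_le by (intro mult_left_mono)
    finally show "dist (G p) (G q) \<le> L * dist p q" .
  qed (use lipschitz_on_nonneg[OF assms(2)] in simp)
  moreover have "norm (G p) \<le> M" if "p \<in> cball (x0, 0) r" for p :: "'a \<times> 'a"
    using assms(3)[OF fst_in[OF that]] unfolding G_def by (simp add: norm_Pair)
  ultimately obtain T X where "T > 0" "X 0 = (x0, 0)"
    and X: "\<forall>t\<in>{0..T}. X t \<in> cball (x0, 0) r \<and> (X has_vector_derivative G (X t)) (at t within {0..T})"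
    using ode_local_existence_banach[OF assms(1)] by blast
  have "((\<lambda>s. fst (X s)) has_vector_derivative F (fst (X t))) (at t within {0..T})" if "t \<in> {0..T}" for t
    using bounded_linear.has_vector_derivative[OF bounded_linear_fst] X that unfolding G_def by fastforce
  moreover have "fst (X t) \<in> cball x0 r" if "t \<in> {0..T}" for t using X that fst_in by blast
  ultimately show ?thesis using \<open>T > 0\<close> \<open>X 0 = (x0, 0)\<close>
    by (intro exI[of _ T] conjI exI[of _ "\<lambda>s. fst (X s)"]) auto
qed

lemma norm_diff_le_of_vector_derivative_bound:
  fixes g :: "real \<Rightarrow> 'a::real_normed_vector"
  assumes "a \<le> b" "s \<in> {a..b}"
    and "\<And>s. s \<in> {a..b} \<Longrightarrow> (g has_vector_derivative g' s) (at s within {a..b})"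
    and "\<And>s. s \<in> {a..b} \<Longrightarrow> norm (g' s) \<le> B"
  shows "norm (g s - g a) \<le> B * (s - a)"
proof -
  have "norm (g s - g a) \<le> B * norm (s - a)"
  proof (rule differentiable_bound[where f' = "\<lambda>s h. h *\<^sub>R g' s"])
    show "(g has_derivative (\<lambda>h. h *\<^sub>R g' x)) (at x within {a..b})" if "x \<in> {a..b}" for x
      using assms(3)[OF that] unfolding has_vector_derivative_def .
    show "onorm (\<lambda>h. h *\<^sub>R g' x) \<le> B" if "x \<in> {a..b}" for x
      using assms(4)[OF that] by (intro onorm_le) (auto simp: mult.commute[of B] intro: mult_left_mono)
  qed (use assms(1,2) in auto)
  thus ?thesis using assms(2) by simp
qed

lemma lipschitz_on_of_vector_derivative_bound:
  fixes x :: "real \<Rightarrow> 'a::real_normed_vector"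
  assumes "\<And>t. t \<in> {a..b} \<Longrightarrow> (x has_vector_derivative x' t) (at t within {a..b})"
    and "\<And>t. t \<in> {a..b} \<Longrightarrow> norm (x' t) \<le> M" "0 \<le> M"
  shows "M-lipschitz_on {a..b} x"
proof (rule lipschitz_on_leI)
  fix s t assume st: "s \<in> {a..b}" "t \<in> {a..b}" "s \<le> t"
  hence sub: "{s..t} \<subseteq> {a..b}" by auto
  have "norm (x t - x s) \<le> M * (t - s)"
  proof (rule norm_diff_le_of_vector_derivative_bound[of s t t])
    show "(x has_vector_derivative x' u) (at u within {s..t})" if "u \<in> {s..t}" for u
      using assms(1) sub that by (blast intro: has_vector_derivative_within_subset)
    show "norm (x' u) \<le> M" if "u \<in> {s..t}" for u using assms(2) sub that by blast
  qed (use st in auto)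
  thus "dist (x s) (x t) \<le> M * dist s t" using st by (simp add: dist_norm dist_real_def norm_minus_commute)
qed fact

lemma zero_of_vector_derivative_dominated:
  fixes g :: "real \<Rightarrow> 'a::real_normed_vector"
  assumes "0 \<le> h" "0 \<le> K" "h * K \<le> 1/2" "g a = 0"
    and der: "\<And>s. s \<in> {a..a + h} \<Longrightarrow> (g has_vector_derivative g' s) (at s within {a..a + h})"
    and dominated: "\<And>s. s \<in> {a..a + h} \<Longrightarrow> norm (g' s) \<le> K * norm (g s)"
    and "s \<in> {a..a + h}"
  shows "g s = 0"
proof -
  have "continuous_on {a..a + h} (\<lambda>s. norm (g s))"
    using der has_vector_derivative_continuous
    unfolding continuous_on_eq_continuous_within by (blast intro: continuous_intros)
  moreover have "compact {a..a + h}" "{a..a + h} \<noteq> {}" using assms(1) by auto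
  ultimately obtain s0 where s0: "s0 \<in> {a..a + h}" "\<And>s. s \<in> {a..a + h} \<Longrightarrow> norm (g s) \<le> norm (g s0)"
    by (metis continuous_attains_sup)
  define m where "m = norm (g s0)"
  have "norm (g s0 - g a) \<le> (K * m) * (s0 - a)"
  proof (rule norm_diff_le_of_vector_derivative_bound[OF _ s0(1) der])
    show "norm (g' s) \<le> K * m" if "s \<in> {a..a + h}" for s
      using dominated[OF that] mult_left_mono[OF s0(2)[OF that] assms(2)] unfolding m_def by linarith
  qed (use assms(1) in simp)
  also have "\<dots> \<le> (K * m) * h" using s0(1) assms(2) unfolding m_def by (intro mult_left_mono) auto
  also have "\<dots> = (h * K) * m" by simp
  also have "\<dots> \<le> (1/2) * m" using assms(3) unfolding m_def by (rule mult_right_mono) simp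
  finally have "m = 0" unfolding m_def using assms(4) by simp
  thus ?thesis using s0(2)[OF assms(7)] unfolding m_def by simp
qed

lemma ode_solutions_agree_right:
  fixes F :: "'a::real_normed_vector \<Rightarrow> 'a"
  assumes d1: "\<And>t. t \<in> {0..T} \<Longrightarrow> (y1 has_vector_derivative F (y1 t)) (at t within {0..T})"
    and d2: "\<And>t. t \<in> {0..T} \<Longrightarrow> (y2 has_vector_derivative F (y2 t)) (at t within {0..T})"
    and "0 \<le> \<tau>" "\<tau> < T" "y1 \<tau> = y2 \<tau>" "0 < r" and lip: "L-lipschitz_on (cball (y1 \<tau>) r) F"
  obtains h where "0 < h" "\<tau> + h \<le> T" "\<And>s. s \<in> {\<tau>..\<tau> + h} \<Longrightarrow> y1 s = y2 s"
proof -
  have cont: "continuous_on {0..T} y1" "continuous_on {0..T} y2"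
    using d1 d2 has_vector_derivative_continuous unfolding continuous_on_eq_continuous_within by blast+
  have "\<tau> \<in> {0..T}" using assms(3,4) by simp
  obtain e1 where e1: "0 < e1" "\<And>s. s \<in> {0..T} \<Longrightarrow> dist s \<tau> < e1 \<Longrightarrow> dist (y1 s) (y1 \<tau>) < r"
    using cont(1) \<open>\<tau> \<in> {0..T}\<close> \<open>0 < r\<close> unfolding continuous_on_iff by metis
  obtain e2 where e2: "0 < e2" "\<And>s. s \<in> {0..T} \<Longrightarrow> dist s \<tau> < e2 \<Longrightarrow> dist (y2 s) (y2 \<tau>) < r"
    using cont(2) \<open>\<tau> \<in> {0..T}\<close> \<open>0 < r\<close> unfolding continuous_on_iff by metis
  define h where "h = min (min e1 e2 / 2) (min (T - \<tau>) (1 / (2 * (L + 1))))"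
  have L: "0 \<le> L" using lipschitz_on_nonneg[OF lip] .
  have h_le: "h \<le> min e1 e2 / 2" "h \<le> T - \<tau>" "h \<le> 1 / (2 * (L + 1))"
    unfolding h_def by (simp_all only: min.cobounded1 min.coboundedI2)
  have "0 < h" unfolding h_def using e1(1) e2(1) assms(4) L by auto
  hence h: "0 < h" "h < e1" "h < e2" "\<tau> + h \<le> T" "h * L \<le> 1/2"
    using h_le e1(1) e2(1) L by (auto simp: le_divide_eq algebra_simps)
  have sub: "{\<tau>..\<tau> + h} \<subseteq> {0..T}" using assms(3) h by auto
  have "y1 s - y2 s = 0" if "s \<in> {\<tau>..\<tau> + h}" for s
  proof (rule zero_of_vector_derivative_dominated[OF _ L h(5) _ _ _ that])
    show "((\<lambda>s. y1 s - y2 s) has_vector_derivative F (y1 s) - F (y2 s)) (at s within {\<tau>..\<tau> + h})"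
      if "s \<in> {\<tau>..\<tau> + h}" for s
      using sub that by (intro has_vector_derivative_diff has_vector_derivative_within_subset[OF d1]
          has_vector_derivative_within_subset[OF d2]) auto
    show "norm (F (y1 s) - F (y2 s)) \<le> L * norm (y1 s - y2 s)" if "s \<in> {\<tau>..\<tau> + h}" for s
    proof -
      have "y1 s \<in> cball (y1 \<tau>) r" "y2 s \<in> cball (y1 \<tau>) r"
        using e1(2)[of s] e2(2)[of s] sub that h assms(5) by (auto simp: dist_real_def dist_commute)
      thus ?thesis using lipschitz_onD[OF lip] by (simp add: dist_norm)
    qed
  qed (use h assms(5) in auto)
  thus ?thesis using that h by simp
qed

lemma ode_unique:
  fixes F :: "'a::real_normed_vector \<Rightarrow> 'a"
  assumes d1: "\<And>t. t \<in> {0..T} \<Longrightarrow> (y1 has_vector_derivative F (y1 t)) (at t within {0..T})"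
    and d2: "\<And>t. t \<in> {0..T} \<Longrightarrow> (y2 has_vector_derivative F (y2 t)) (at t within {0..T})"
    and "y1 0 = y2 0"
    and local_lipschitz: "\<And>t. t \<in> {0..T} \<Longrightarrow> \<exists>r>0. \<exists>L. L-lipschitz_on (cball (y1 t) r) F"
    and "t \<in> {0..T}"
  shows "y1 t = y2 t"
proof -
  define S where "S = {t\<in>{0..T}. \<forall>s\<in>{0..t}. y1 s = y2 s}"
  define \<tau> where "\<tau> = Sup S"
  have "0 \<in> S" unfolding S_def using assms(3,5) by auto
  have bdd: "bdd_above S" unfolding S_def by (rule bdd_aboveI[of _ T]) auto
  have "0 \<le> \<tau>" unfolding \<tau>_def by (rule cSup_upper[OF \<open>0 \<in> S\<close> bdd])
  moreover have "\<tau> \<le> T" unfolding \<tau>_def by (rule cSup_least) (use \<open>0 \<in> S\<close> in \<open>auto simp: S_def\<close>)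
  ultimately have \<tau>: "0 \<le> \<tau>" "\<tau> \<le> T" .
  have before: "y1 s = y2 s" if s: "0 \<le> s" "s < \<tau>" for s
  proof -
    obtain t where "t \<in> S" "s < t" using less_cSupD[of S s] \<open>0 \<in> S\<close> s(2) unfolding \<tau>_def by blast
    thus ?thesis using s(1) unfolding S_def by auto
  qed
  have "y1 \<tau> = y2 \<tau>"
  proof (cases "\<tau> = 0")
    case False
    have "continuous_on {0..T} y1" "continuous_on {0..T} y2"
      using d1 d2 has_vector_derivative_continuous unfolding continuous_on_eq_continuous_within by blast+
    hence "continuous_on {0..T} (\<lambda>s. y1 s - y2 s)" by (intro continuous_intros)
    hence "closed {s \<in> {0..T}. y1 s - y2 s = 0}"
      by (rule continuous_closed_preimage_constant) simp
    moreover have "{0..<\<tau>} \<subseteq> {s \<in> {0..T}. y1 s - y2 s = 0}" using before \<tau> by auto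
    ultimately have "closure {0..<\<tau>} \<subseteq> {s \<in> {0..T}. y1 s - y2 s = 0}" by (rule closure_minimal[rotated])
    thus ?thesis using False \<tau> by auto
  qed (use assms(3) in simp)
  hence "\<tau> \<in> S" unfolding S_def using \<tau> before by (auto simp: le_less)
  have "\<tau> = T"
  proof (rule ccontr)
    assume "\<tau> \<noteq> T"
    obtain r L where r: "0 < r" and lip: "L-lipschitz_on (cball (y1 \<tau>) r) F"
      using local_lipschitz[of \<tau>] \<tau> by auto
    have "\<tau> < T" using \<open>\<tau> \<noteq> T\<close> \<tau>(2) by simp
    obtain h where h: "0 < h" "\<tau> + h \<le> T" "\<And>s. s \<in> {\<tau>..\<tau> + h} \<Longrightarrow> y1 s = y2 s"
      using ode_solutions_agree_right[OF d1 d2 \<tau>(1) \<open>\<tau> < T\<close> \<open>y1 \<tau> = y2 \<tau>\<close> r lip] by blast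
    have "\<tau> + h \<in> S" using \<open>\<tau> \<in> S\<close> h \<tau> unfolding S_def by (auto simp: not_le)
    hence "\<tau> + h \<le> \<tau>" unfolding \<tau>_def using bdd by (rule cSup_upper)
    thus False using h by simp
  qed
  thus ?thesis using \<open>\<tau> \<in> S\<close> assms(5) unfolding S_def by auto
qed

section \<open>The closed-loop system\<close>

lemma lipschitz_on_imp_locally_lipschitz_on:
  "L-lipschitz_on S f \<Longrightarrow> locally_lipschitz_on S f"
  unfolding locally_lipschitz_on_def by (meson inf_le2 lipschitz_on_subset zero_less_one)

lemma cl_solution_feedback:
  fixes A :: "'a::{real_inner,complete_space} \<Rightarrow> 'a set"
  assumes "maximal_monotone A" "0 < \<theta>" "cl_solution A \<theta> p x0 T x lam" "t \<in> {0..T}"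
  shows "lam t = feedback_lambda A \<theta> (p - 1) (x t)"
    and "(x has_vector_derivative closed_loop_field A \<theta> (p - 1) (x t)) (at t within {0..T})"
proof -
  have "0 < lam t" "lam t * resolvent_gap A (lam t) (x t) ^ (p - 1) = \<theta>"
    and der: "(x has_vector_derivative (resolvent A (lam t) (x t) - x t)) (at t within {0..T})"
    using assms(3,4) unfolding cl_solution_def resolvent_gap_def by (auto simp: norm_minus_commute)
  thus "lam t = feedback_lambda A \<theta> (p - 1) (x t)"
    using feedback_lambda_eqI[OF assms(1,2)] by metis
  thus "(x has_vector_derivative closed_loop_field A \<theta> (p - 1) (x t)) (at t within {0..T})"
    using der unfolding closed_loop_field_def by simp
qed

lemma cl_solutionI:
  fixes A :: "'a::{real_inner,complete_space} \<Rightarrow> 'a set"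
  assumes "maximal_monotone A" "0 < \<theta>" "x 0 = x0"
    and "\<And>t. t \<in> {0..T} \<Longrightarrow> 0 \<notin> A (x t)"
    and "\<And>t. t \<in> {0..T} \<Longrightarrow> (x has_vector_derivative closed_loop_field A \<theta> (p - 1) (x t)) (at t within {0..T})"
  shows "cl_solution A \<theta> p x0 T x (\<lambda>t. feedback_lambda A \<theta> (p - 1) (x t))"
  unfolding cl_solution_def
  using assms feedback_lambda_root[OF assms(1,2)]
  by (auto simp: closed_loop_field_def resolvent_gap_def norm_minus_commute)

lemma cl_solution_unique:
  fixes A :: "'a::{real_inner,complete_space} \<Rightarrow> 'a set"
  assumes "maximal_monotone A" "0 < \<theta>"
    and x: "cl_solution A \<theta> p x0 T x lam" and y: "cl_solution A \<theta> p x0 T y mu"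
    and regular: "\<And>t. t \<in> {0..T} \<Longrightarrow> 0 \<notin> A (x t)"
    and "t \<in> {0..T}"
  shows "y t = x t \<and> mu t = lam t"
proof -
  have "x t = y t"
  proof (rule ode_unique[where F = "closed_loop_field A \<theta> (p - 1)"])
    show "(x has_vector_derivative closed_loop_field A \<theta> (p - 1) (x s)) (at s within {0..T})"
      "(y has_vector_derivative closed_loop_field A \<theta> (p - 1) (y s)) (at s within {0..T})"
      if "s \<in> {0..T}" for s
      using cl_solution_feedback(2)[OF assms(1,2) _ that] x y by blast+
    show "x 0 = y 0" using x y unfolding cl_solution_def by simp
    show "\<exists>r>0. \<exists>L. L-lipschitz_on (cball (x s) r) (closed_loop_field A \<theta> (p - 1))"
      if "s \<in> {0..T}" for s
      using closed_loop_field_local_lipschitz[OF assms(1,2) regular[OF that]] by metis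
  qed fact
  moreover have "lam t = feedback_lambda A \<theta> (p - 1) (x t)" "mu t = feedback_lambda A \<theta> (p - 1) (y t)"
    using cl_solution_feedback(1)[OF assms(1,2) _ \<open>t \<in> {0..T}\<close>] x y by blast+
  ultimately show ?thesis by simp
qed

lemma closed_loop_local_existence:
  fixes A :: "'a::{real_inner,complete_space} \<Rightarrow> 'a set"
  assumes "maximal_monotone A" "0 < \<theta>" "0 \<notin> A x0"
  obtains T x L where "0 < T" "x 0 = x0" "\<And>t. t \<in> {0..T} \<Longrightarrow> 0 \<notin> A (x t)"
    "\<And>t. t \<in> {0..T} \<Longrightarrow> (x has_vector_derivative closed_loop_field A \<theta> n (x t)) (at t within {0..T})"
    "continuous_on {0..T} (\<lambda>t. closed_loop_field A \<theta> n (x t))"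
    "L-lipschitz_on {0..T} (\<lambda>t. feedback_lambda A \<theta> n (x t))"
proof -
  let ?F = "closed_loop_field A \<theta> n" and ?\<Lambda> = "feedback_lambda A \<theta> n"
  obtain r K M where "0 < r" and regular: "\<And>x. x \<in> cball x0 r \<Longrightarrow> 0 \<notin> A x"
    and bound: "\<And>x. x \<in> cball x0 r \<Longrightarrow> norm (?F x) \<le> M"
    and lip_F: "K-lipschitz_on (cball x0 r) ?F" and lip_\<Lambda>: "K-lipschitz_on (cball x0 r) ?\<Lambda>"
    using closed_loop_field_local_lipschitz[OF assms] by metis
  obtain T x where "0 < T" "x 0 = x0"
    and x: "\<And>t. t \<in> {0..T} \<Longrightarrow> x t \<in> cball x0 r \<and> (x has_vector_derivative ?F (x t)) (at t within {0..T})"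
    using ode_local_existence[OF \<open>0 < r\<close> lip_F bound] by metis
  have "continuous_on {0..T} x"
    using x has_vector_derivative_continuous unfolding continuous_on_eq_continuous_within by blast
  hence "continuous_on {0..T} (\<lambda>t. ?F (x t))"
    using x continuous_on_compose2[OF lipschitz_on_continuous_on[OF lip_F]] by blast
  moreover have "0 \<le> M" using order_trans[OF norm_ge_zero bound[of x0]] \<open>0 < r\<close> by simp
  hence "M-lipschitz_on {0..T} x"
    using x bound by (intro lipschitz_on_of_vector_derivative_bound) auto
  hence "(K * M)-lipschitz_on {0..T} (\<lambda>t. ?\<Lambda> (x t))"
    using x by (intro lipschitz_on_compose2 lipschitz_on_subset[OF lip_\<Lambda>]) auto
  ultimately show ?thesis using that \<open>0 < T\<close> \<open>x 0 = x0\<close> x regular by blast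
qed

theorem theorem2p1:
  fixes A :: "'a::{real_inner, complete_space} \<Rightarrow> 'a set"
    and \<theta> :: real and p :: nat and x0 :: 'a
  assumes "maximal_monotone A"
    and "{x. 0 \<in> A x} \<noteq> {}"
    and "\<theta> > 0"
    and "p \<ge> 1"
    and "0 \<notin> A x0"
  shows "\<exists>t0 > 0. \<exists>x lam.
           cl_solution A \<theta> p x0 t0 x lam \<and>
           (\<forall>y mu. cl_solution A \<theta> p x0 t0 y mu \<longrightarrow> (\<forall>t \<in> {0..t0}. y t = x t \<and> mu t = lam t)) \<and>
           (\<exists>x'. (\<forall>t \<in> {0..t0}. (x has_vector_derivative x' t) (at t within {0..t0})) \<and>
                 continuous_on {0..t0} x') \<and>
           locally_lipschitz_on {0..t0} lam"
proof -
  obtain T x L where "0 < T" "x 0 = x0" and regular: "\<And>t. t \<in> {0..T} \<Longrightarrow> 0 \<notin> A (x t)"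
    and x': "\<And>t. t \<in> {0..T} \<Longrightarrow> (x has_vector_derivative closed_loop_field A \<theta> (p - 1) (x t)) (at t within {0..T})"
    and "continuous_on {0..T} (\<lambda>t. closed_loop_field A \<theta> (p - 1) (x t))"
    and "L-lipschitz_on {0..T} (\<lambda>t. feedback_lambda A \<theta> (p - 1) (x t))"
    using closed_loop_local_existence[OF assms(1,3,5)] by metis
  define lam where "lam t = feedback_lambda A \<theta> (p - 1) (x t)" for t
  have sol: "cl_solution A \<theta> p x0 T x lam"
    unfolding lam_def by (rule cl_solutionI[where x = x, OF assms(1,3) \<open>x 0 = x0\<close> regular x'])
  have "\<forall>y mu. cl_solution A \<theta> p x0 T y mu \<longrightarrow> (\<forall>t\<in>{0..T}. y t = x t \<and> mu t = lam t)"
    using cl_solution_unique[OF assms(1,3) sol _ regular] by blast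
  moreover have "\<exists>x'. (\<forall>t\<in>{0..T}. (x has_vector_derivative x' t) (at t within {0..T})) \<and>
      continuous_on {0..T} x'"
    using x' \<open>continuous_on {0..T} _\<close> by (intro exI[of _ "\<lambda>t. closed_loop_field A \<theta> (p - 1) (x t)"]) blast
  moreover have "locally_lipschitz_on {0..T} lam"
    unfolding lam_def by (rule lipschitz_on_imp_locally_lipschitz_on) fact
  ultimately show ?thesis using \<open>0 < T\<close> sol by blast
qed

end
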